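(* Let $R$ be a commutative ring containing elements $x,y,z,w$, and let $f$ be an $R$-valued function on isomorphism classes of binary delta-matroids such that for every binary delta-matroid $D=(E;\Phi)$: $f(D)=x f(D\setminus e)+y f(D/e)$ for every $e\in E$ that is neither a loop nor a coloop; $f(D)=z f(D\setminus e)$ for every loop $e$; and $f(D)=w f(D/e)$ for every coloop $e$. Then for every binary delta-matroid $D=(E;\Phi)$ and distinct $a,b\in E$, $$f(D)-f(D'_{ab})=f(\widetilde D_{ab})-f\big((\widetilde D_{ab})'_{ab}\big).$$
   Context: Set system $(E;\Phi)$: finite $E$, nonempty $\Phi\subseteq2^E$, up to isomorphism. Twist $D*E'=(E;\{\phi\Delta E'\mid\phi\in\Phi\})$. A binary delta-matroid is a set system isomorphic to a twist of the nondegeneracy delta-matroid of a framed graph (simple graph with framing $V\to\{0,1\}$, $\mathbb{F}_2$-adjacency matrix with framing on the diagonal; feasible sets are the vertex subsets whose induced adjacency matrix is nondegenerate over $\mathbb{F}_2$, including $\emptyset$). For $D=(E;\Phi)$: $e$ is a coloop if it lies in every feasible set, a loop if in none; for non-coloop $e$, $D\setminus e=(E\setminus\{e\};\{\phi\in\Phi\mid e\notin\phi\})$; for non-loop $e$, $D/e=(E\setminus\{e\};\{\phi\setminus\{e\}\mid e\in\phi\in\Phi\})$; if $e$ is a coloop $D\setminus e:=D/e$, if $e$ is a loop $D/e:=D\setminus e$. (Minors of binary delta-matroids are binary.) Sliding: $\widetilde D_{ab}=(E;\Phi\,\Delta\,\{\phi\sqcup\{a\}\mid\phi\subseteq E\setminus\{a,b\},\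 \phi\sqcup\{b\}\in\Phi\})$; exchange: $D'_{ab}=\big(\widetilde{(D*\{b\})}_{ab}\big)*\{b\}$. *)

theory Defs
  imports "HOL-Library.Z2" "HOL-Combinatorics.Permutations"
begin

type_synonym 'a setsys = "'a set \<times> 'a set set"

definition symdiff :: "'b set \<Rightarrow> 'b set \<Rightarrow> 'b set" where
  "symdiff A B = (A - B) \<union> (B - A)"

definition set_system :: "'a setsys \<Rightarrow> bool" where
  "set_system D \<longleftrightarrow> finite (fst D) \<and> snd D \<noteq> {} \<and> (\<forall>\<phi>\<in>snd D. \<phi> \<subseteq> fst D)"

definition ss_iso :: "'a setsys \<Rightarrow> 'b setsys \<Rightarrow> bool" where
  "ss_iso D D' \<longleftrightarrow> (\<exists>g. bij_betw g (fst D) (fst D') \<and> snd D' = (\<lambda>\<phi>. g ` \<phi>) ` snd D)"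

definition twist :: "'a setsys \<Rightarrow> 'a set \<Rightarrow> 'a setsys" where
  "twist D E' = (fst D, (\<lambda>\<phi>. symdiff \<phi> E') ` snd D)"

text \<open>Framed graph on vertex set V: symmetric boolean relation A on V; off-diagonal entries are
  the adjacency of a simple graph, diagonal entries are the framing.\<close>

definition framed_graph :: "'a set \<Rightarrow> ('a \<Rightarrow> 'a \<Rightarrow> bool) \<Rightarrow> bool" where
  "framed_graph V A \<longleftrightarrow> finite V \<and> (\<forall>i\<in>V. \<forall>j\<in>V. A i j = A j i)"

definition det_F2 :: "('a \<Rightarrow> 'a \<Rightarrow> bool) \<Rightarrow> 'a set \<Rightarrow> bit" where
  "det_F2 A X = (\<Sum>p | p permutes X. of_int (sign p) * (\<Prod>i\<in>X. (if A i (p i) then 1 else 0)))"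

definition nondeg_dm :: "'a set \<Rightarrow> ('a \<Rightarrow> 'a \<Rightarrow> bool) \<Rightarrow> 'a setsys" where
  "nondeg_dm V A = (V, {X. X \<subseteq> V \<and> det_F2 A X \<noteq> 0})"

text \<open>Binary delta-matroid: isomorphic to a twist of the nondegeneracy delta-matroid of a framed
  graph. Since isomorphisms may relabel vertices, we transport the framed graph to the ground set.\<close>

definition binary_dm :: "'a setsys \<Rightarrow> bool" where
  "binary_dm D \<longleftrightarrow> (\<exists>A T. framed_graph (fst D) A \<and> T \<subseteq> fst D \<and>
      ss_iso (twist (nondeg_dm (fst D) A) T) D)"

definition coloop :: "'a setsys \<Rightarrow> 'a \<Rightarrow> bool" where
  "coloop D e \<longleftrightarrow> (\<forall>\<phi>\<in>snd D. e \<in> \<phi>)"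

definition loop :: "'a setsys \<Rightarrow> 'a \<Rightarrow> bool" where
  "loop D e \<longleftrightarrow> (\<forall>\<phi>\<in>snd D. e \<notin> \<phi>)"

definition contr :: "'a setsys \<Rightarrow> 'a \<Rightarrow> 'a setsys" where
  "contr D e = (if loop D e then (fst D - {e}, {\<phi> \<in> snd D. e \<notin> \<phi>})
                else (fst D - {e}, {\<phi> - {e} | \<phi>. \<phi> \<in> snd D \<and> e \<in> \<phi>}))"

definition del :: "'a setsys \<Rightarrow> 'a \<Rightarrow> 'a setsys" where
  "del D e = (if coloop D e then contr D e else (fst D - {e}, {\<phi> \<in> snd D. e \<notin> \<phi>}))"

definition slide :: "'a setsys \<Rightarrow> 'a \<Rightarrow> 'a \<Rightarrow> 'a setsys" where
  "slide D a b = (fst D, symdiff (snd D)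
      {\<phi> \<union> {a} | \<phi>. \<phi> \<subseteq> fst D - {a, b} \<and> \<phi> \<union> {b} \<in> snd D})"

definition exch :: "'a setsys \<Rightarrow> 'a \<Rightarrow> 'a \<Rightarrow> 'a setsys" where
  "exch D a b = twist (slide (twist D {b}) a b) {b}"

end

theory Submission
  imports Defs "Jordan_Normal_Form.Determinant"
begin

text \<open>Write the defect of D as f(D) - f(D'_ab) - f(D~_ab) + f((D~_ab)'_ab). At every element e other
  than a and b, sliding and exchanging commute with deletion and contraction and preserve loops and
  coloops, so the defect satisfies the same deletion-contraction recursion as f. Since binary
  delta-matroids are closed under all these operations, induction on the ground set reduces the claim
  to the ground set {a, b}, where f is computed explicitly.

  The substance lies in the closure under sliding. By principal pivoting, any feasible set of a
  binary delta-matroid can be made the twisting set of its representation. Choosing one that avoids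
  a, sliding becomes adding row and column b to row and column a of the framed graph (if b is not
  in it) or toggling the edge ab (if it is); if every feasible set contains a, sliding does nothing.\<close>

section \<open>Principal minors over GF(2)\<close>

lemma bit_add_self [simp]: "(x::bit) + x = 0"
  by (cases x) simp_all

lemma of_int_sign_bit [simp]: "(of_int (sign p) :: bit) = 1"
  by (cases rule: sign_cases[of p]) simp_all

definition det_bit :: "('a \<Rightarrow> 'a \<Rightarrow> bit) \<Rightarrow> 'a set \<Rightarrow> bit" where
  "det_bit M X = (\<Sum>p | p permutes X. \<Prod>i\<in>X. M i (p i))"

definition bit_matrix :: "('a \<Rightarrow> 'a \<Rightarrow> bool) \<Rightarrow> 'a \<Rightarrow> 'a \<Rightarrow> bit" where
  "bit_matrix A i j = of_bool (A i j)"

lemma det_F2_eq_det_bit: "det_F2 A X = det_bit (bit_matrix A) X"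
  unfolding det_F2_def det_bit_def bit_matrix_def
  by (rule sum.cong[OF refl]) (simp only: of_int_sign_bit mult_1 of_bool_def)

lemma det_bit_cong:
  assumes "\<And>i j. i \<in> X \<Longrightarrow> j \<in> X \<Longrightarrow> M i j = M' i j"
  shows "det_bit M X = det_bit M' X"
  unfolding det_bit_def
proof (rule sum.cong[OF refl], rule prod.cong[OF refl])
  fix p i assume "p \<in> {p. p permutes X}" "i \<in> X"
  then show "M i (p i) = M' i (p i)" using assms permutes_in_image by fastforce
qed

lemma det_bit_reindex:
  assumes inj: "inj_on h Y"
  shows "det_bit (\<lambda>i j. M (h i) (h j)) Y = det_bit M (h ` Y)"
proof -
  have "det_bit M (h ` Y) =
      (\<Sum>p | p permutes Y. \<Prod>x\<in>h ` Y. M x (if x \<in> h ` Y then h (p (inv_into Y h x)) else x))"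
    unfolding det_bit_def
    by (rule sum.reindex_bij_betw[OF bij_betw_permutations[OF inj_on_imp_bij_betw[OF inj]], symmetric])
  also have "\<dots> = det_bit (\<lambda>i j. M (h i) (h j)) Y"
    unfolding det_bit_def using inj by (intro sum.cong refl) (simp add: prod.reindex inv_into_f_f)
  finally show ?thesis ..
qed

lemma det_bit_transpose:
  assumes "finite X"
  shows "det_bit (\<lambda>i j. M j i) X = det_bit M X"
  unfolding det_bit_def
proof (rule sum.reindex_bij_witness[where i = Hilbert_Choice.inv and j = Hilbert_Choice.inv])
  fix p assume p: "p \<in> {p. p permutes X}"
  then show "Hilbert_Choice.inv (Hilbert_Choice.inv p) = p" by (simp add: permutes_inv_inv)
  show "Hilbert_Choice.inv p \<in> {p. p permutes X}" using p by (simp add: permutes_inv)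
  have "(\<Prod>x\<in>X. (\<lambda>y. M y (Hilbert_Choice.inv p y)) (p x)) = (\<Prod>y\<in>X. M y (Hilbert_Choice.inv p y))"
    by (rule prod.reindex_bij_betw) (use p in \<open>simp add: permutes_imp_bij\<close>)
  then show "(\<Prod>i\<in>X. M i (Hilbert_Choice.inv p i)) = (\<Prod>i\<in>X. M (p i) i)"
    using p by (simp add: permutes_inverses)
qed (simp_all add: permutes_inv_inv permutes_inv)

lemma det_bit_row_add:
  assumes X: "finite X" "r \<in> X"
    and r: "\<And>j. M r j = M1 r j + M2 r j"
    and o1: "\<And>i j. i \<noteq> r \<Longrightarrow> M1 i j = M i j" and o2: "\<And>i j. i \<noteq> r \<Longrightarrow> M2 i j = M i j"
  shows "det_bit M X = det_bit M1 X + det_bit M2 X"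
  unfolding det_bit_def sum.distrib[symmetric]
proof (rule sum.cong[OF refl])
  fix p :: "'a \<Rightarrow> 'a"
  have e: "\<And>N. (\<Prod>i\<in>X. N i (p i)) = N r (p r) * (\<Prod>i\<in>X-{r}. N i (p i))"
    using X by (simp add: prod.remove)
  have c1: "(\<Prod>i\<in>X-{r}. M1 i (p i)) = (\<Prod>i\<in>X-{r}. M i (p i))"
    by (rule prod.cong) (auto simp: o1)
  have c2: "(\<Prod>i\<in>X-{r}. M2 i (p i)) = (\<Prod>i\<in>X-{r}. M i (p i))"
    by (rule prod.cong) (auto simp: o2)
  show "(\<Prod>i\<in>X. M i (p i)) = (\<Prod>i\<in>X. M1 i (p i)) + (\<Prod>i\<in>X. M2 i (p i))"
    unfolding e[of M] e[of M1] e[of M2] c1 c2 r by (rule distrib_right)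
qed

lemma det_bit_col_add:
  assumes X: "finite X" "c \<in> X"
    and c: "\<And>i. M i c = M1 i c + M2 i c"
    and o1: "\<And>i j. j \<noteq> c \<Longrightarrow> M1 i j = M i j" and o2: "\<And>i j. j \<noteq> c \<Longrightarrow> M2 i j = M i j"
  shows "det_bit M X = det_bit M1 X + det_bit M2 X"
proof -
  have "det_bit (\<lambda>i j. M j i) X = det_bit (\<lambda>i j. M1 j i) X + det_bit (\<lambda>i j. M2 j i) X"
    by (rule det_bit_row_add[OF X]) (simp_all add: c o1 o2)
  then show ?thesis
    by (simp only: det_bit_transpose[OF X(1), of M] det_bit_transpose[OF X(1), of M1]
        det_bit_transpose[OF X(1), of M2])
qed

definition kernel_trivial :: "('a \<Rightarrow> 'a \<Rightarrow> bit) \<Rightarrow> 'a set \<Rightarrow> bool" where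
  "kernel_trivial M X \<longleftrightarrow>
     (\<forall>v. (\<forall>i. i \<notin> X \<longrightarrow> v i = 0) \<longrightarrow> (\<forall>i\<in>X. (\<Sum>j\<in>X. M i j * v j) = 0) \<longrightarrow> (\<forall>i. v i = 0))"

lemma det_mat_eq_det_bit:
  assumes h: "bij_betw h {0..<n} X"
  shows "det (mat n n (\<lambda>(i, j). M (h i) (h j))) = det_bit M X"
proof -
  have "det (mat n n (\<lambda>(i, j). M (h i) (h j))) = det_bit (\<lambda>i j. M (h i) (h j)) {0..<n}"
    unfolding det_def'[OF mat_carrier] det_bit_def
  proof (rule sum.cong[OF refl])
    fix p assume "p \<in> {p. p permutes {0..<n}}"
    then have p: "\<And>i. i < n \<Longrightarrow> p i < n" using permutes_in_image by fastforce
    show "signof p * (\<Prod>i = 0..<n. mat n n (\<lambda>(i, j). M (h i) (h j)) $$ (i, p i)) =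
        (\<Prod>i\<in>{0..<n}. M (h i) (h (p i)))"
      by (simp add: p)
  qed
  also have "\<dots> = det_bit M X"
    using det_bit_reindex[of h "{0..<n}" M] h by (simp add: bij_betw_def)
  finally show ?thesis .
qed

lemma mat_mult_vec_reindex:
  assumes h: "bij_betw h {0..<n} X" and k: "k < n"
  shows "(mat n n (\<lambda>(i, j). M (h i) (h j)) *\<^sub>v vec n (\<lambda>l. u (h l))) $ k = (\<Sum>j\<in>X. M (h k) j * u j)"
proof -
  have inj: "inj_on h {0..<n}" and img: "h ` {0..<n} = X" using h by (auto simp: bij_betw_def)
  have "(mat n n (\<lambda>(i, j). M (h i) (h j)) *\<^sub>v vec n (\<lambda>l. u (h l))) $ k =
      (\<Sum>l\<in>{0..<n}. M (h k) (h l) * u (h l))"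
    using k by (simp add: scalar_prod_def)
  also have "\<dots> = (\<Sum>j\<in>X. M (h k) j * u j)"
    using sum.reindex[OF inj, of "\<lambda>j. M (h k) j * u j"] unfolding img comp_def by (rule sym)
  finally show ?thesis .
qed

lemma not_kernel_trivial_if_mat_kernel:
  assumes h: "bij_betw h {0..<n} X"
    and v: "v \<in> carrier_vec n" "v \<noteq> 0\<^sub>v n" "mat n n (\<lambda>(i, j). M (h i) (h j)) *\<^sub>v v = 0\<^sub>v n"
  shows "\<not> kernel_trivial M X"
proof -
  define u where "u i = (if i \<in> X then v $ (inv_into {0..<n} h i) else 0)" for i
  have uh: "u (h l) = v $ l" if "l < n" for l
    using that h by (auto simp: u_def bij_betw_def inv_into_f_f)
  have vu: "vec n (\<lambda>l. u (h l)) = v"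
  proof (rule eq_vecI)
    fix l assume "l < dim_vec v"
    then show "vec n (\<lambda>l. u (h l)) $ l = v $ l" using v(1) uh by simp
  qed (use v(1) in simp)
  have "\<forall>i\<in>X. (\<Sum>j\<in>X. M i j * u j) = 0"
  proof
    fix i assume "i \<in> X"
    then obtain k where k: "k < n" "h k = i" using h by (auto simp: bij_betw_def)
    have "(\<Sum>j\<in>X. M i j * u j) = (mat n n (\<lambda>(i, j). M (h i) (h j)) *\<^sub>v v) $ k"
      using mat_mult_vec_reindex[OF h k(1), of M u] unfolding vu k(2) by (rule sym)
    also have "\<dots> = 0" using v(3) k(1) by simp
    finally show "(\<Sum>j\<in>X. M i j * u j) = 0" .
  qed
  moreover have "\<forall>i. i \<notin> X \<longrightarrow> u i = 0" by (simp add: u_def)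
  moreover obtain l where l: "l < n" "v $ l \<noteq> 0"
  proof -
    have "\<not> (\<forall>l<n. v $ l = 0)"
    proof
      assume zero: "\<forall>l<n. v $ l = 0"
      have "v = 0\<^sub>v n"
      proof (rule eq_vecI)
        fix l assume "l < dim_vec (0\<^sub>v n :: bit vec)"
        then show "v $ l = 0\<^sub>v n $ l" using zero by simp
      qed (use v(1) in simp)
      then show False using v(2) by contradiction
    qed
    then show ?thesis using that by blast
  qed
  then have "u (h l) \<noteq> 0" using uh by simp
  ultimately show ?thesis unfolding kernel_trivial_def by blast
qed

lemma mat_kernel_if_not_kernel_trivial:
  assumes h: "bij_betw h {0..<n} X" and "\<not> kernel_trivial M X"
  shows "\<exists>v. v \<in> carrier_vec n \<and> v \<noteq> 0\<^sub>v n \<and> mat n n (\<lambda>(i, j). M (h i) (h j)) *\<^sub>v v = 0\<^sub>v n"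
proof -
  obtain u i where u0: "\<forall>i. i \<notin> X \<longrightarrow> u i = 0" and uk: "\<forall>i\<in>X. (\<Sum>j\<in>X. M i j * u j) = 0"
    and ui: "u i \<noteq> 0" using assms(2) unfolding kernel_trivial_def by blast
  define v where "v = vec n (\<lambda>l. u (h l))"
  have "i \<in> h ` {0..<n}" using h ui u0 by (auto simp: bij_betw_def)
  then obtain k where k: "k < n" "h k = i" by auto
  then have "v $ k \<noteq> 0" using ui by (simp add: v_def)
  have "v \<noteq> 0\<^sub>v n"
  proof
    assume "v = 0\<^sub>v n"
    then have "v $ k = 0" using k(1) by simp
    then show False using \<open>v $ k \<noteq> 0\<close> by contradiction
  qed
  moreover have "mat n n (\<lambda>(i, j). M (h i) (h j)) *\<^sub>v v = 0\<^sub>v n"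
  proof (rule eq_vecI)
    fix l assume "l < dim_vec (0\<^sub>v n :: bit vec)"
    then have l: "l < n" by simp
    have "(mat n n (\<lambda>(i, j). M (h i) (h j)) *\<^sub>v v) $ l = (\<Sum>j\<in>X. M (h l) j * u j)"
      unfolding v_def by (rule mat_mult_vec_reindex[OF h l])
    also have "\<dots> = 0" using uk h l by (auto simp: bij_betw_def)
    finally show "(mat n n (\<lambda>(i, j). M (h i) (h j)) *\<^sub>v v) $ l = 0\<^sub>v n $ l" using l by simp
  qed simp
  moreover have "v \<in> carrier_vec n" by (simp add: v_def)
  ultimately show ?thesis by blast
qed

lemma det_bit_nonzero_iff_kernel_trivial:
  assumes "finite X"
  shows "det_bit M X \<noteq> 0 \<longleftrightarrow> kernel_trivial M X"
proof -
  obtain h where h: "bij_betw h {0..<card X} X" using ex_bij_betw_nat_finite[OF assms] ..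
  define N where "N = mat (card X) (card X) (\<lambda>(i, j). M (h i) (h j))"
  have "det N = det_bit M X" unfolding N_def by (rule det_mat_eq_det_bit[OF h])
  moreover have "(\<exists>v. v \<in> carrier_vec (card X) \<and> v \<noteq> 0\<^sub>v (card X) \<and> N *\<^sub>v v = 0\<^sub>v (card X))
      \<longleftrightarrow> \<not> kernel_trivial M X"
    unfolding N_def using not_kernel_trivial_if_mat_kernel[OF h] mat_kernel_if_not_kernel_trivial[OF h] by blast
  ultimately show ?thesis using det_0_iff_vec_prod_zero_field[of N "card X"] by (simp add: N_def)
qed

lemma det_bit_eq_rows:
  assumes X: "finite X" "r \<in> X" "s \<in> X" "r \<noteq> s" and rs: "\<And>j. M r j = M s j"
  shows "det_bit M X = 0"
proof -
  \<comment> \<open>the indicator of r and s lies in the kernel of the transpose\<close>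
  define v :: "'a \<Rightarrow> bit" where "v i = of_bool (i \<in> {r, s})" for i
  have "(\<Sum>j\<in>X. M j i * v j) = 0" for i
  proof -
    have "(\<Sum>j\<in>X. M j i * v j) = (\<Sum>j\<in>{r, s}. M j i * v j)"
      by (rule sum.mono_neutral_right) (use X in \<open>auto simp: v_def\<close>)
    also have "\<dots> = M r i + M s i" using X(4) by (simp add: v_def del: mult_bit_eq_and)
    finally show ?thesis by (simp only: rs bit_add_self)
  qed
  moreover have "\<forall>i. i \<notin> X \<longrightarrow> v i = 0" using X(2,3) by (auto simp: v_def)
  moreover have "v r \<noteq> 0" by (simp add: v_def)
  ultimately have "\<not> kernel_trivial (\<lambda>i j. M j i) X"
    unfolding kernel_trivial_def by blast
  then have "det_bit (\<lambda>i j. M j i) X = 0"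
    using det_bit_nonzero_iff_kernel_trivial[OF X(1)] by blast
  then show ?thesis unfolding det_bit_transpose[OF X(1), of M] .
qed

lemma of_bool_add_bit: "(of_bool P :: bit) + of_bool Q = of_bool (P \<noteq> Q)"
  by auto

lemma of_bool_mult_bit: "(of_bool P :: bit) * (of_bool Q * x) = (if P \<and> Q then x else 0)"
  by (cases P; cases Q) simp_all

lemma if_of_bool_bit: "(if c then (of_bool P :: bit) else 0) = of_bool (c \<and> P)"
  by auto

lemma bit_add_add_cancel: "(x::bit) + y + y + z = x + z"
  by (simp only: add.assoc bit_add_self add_0_left)

text \<open>Congruence by the elementary matrix adding row b to row a: row and column b are added
  to row and column a.\<close>

definition add_row_col :: "('a \<Rightarrow> 'a \<Rightarrow> bool) \<Rightarrow> 'a \<Rightarrow> 'a \<Rightarrow> 'a \<Rightarrow> 'a \<Rightarrow> bool" where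
  "add_row_col A a b i j = (if i = a \<and> j = a then A a a \<noteq> A b b else if i = a then A a j \<noteq> A b j
     else if j = a then A i a \<noteq> A i b else A i j)"

definition toggle_edge :: "('a \<Rightarrow> 'a \<Rightarrow> bool) \<Rightarrow> 'a \<Rightarrow> 'a \<Rightarrow> 'a \<Rightarrow> 'a \<Rightarrow> bool" where
  "toggle_edge A a b i j = (if (i = a \<and> j = b) \<or> (i = b \<and> j = a) then \<not> A i j else A i j)"

lemma det_bit_add_row_col_expand:
  assumes X: "finite X" "a \<in> X" and ab: "a \<noteq> b" and sab: "A a b = A b a"
  defines "B \<equiv> bit_matrix A"
  shows "det_bit (bit_matrix (add_row_col A a b)) X = det_bit B X + det_bit (\<lambda>i j. if j = a then B i b else B i j) X
     + det_bit (\<lambda>i j. if i = a then B b j else B i j) X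
     + det_bit (\<lambda>i j. B (if i = a then b else i) (if j = a then b else j)) X"
proof -
  define K where "K i j = B i j + (if j = a then B i b else 0)" for i j
  have eq: "bit_matrix (add_row_col A a b) = (\<lambda>i j. K i j + (if i = a then K b j else 0))"
  proof (intro ext)
    fix i j
    show "bit_matrix (add_row_col A a b) i j = K i j + (if i = a then K b j else 0)"
      unfolding K_def B_def bit_matrix_def if_of_bool_bit of_bool_add_bit of_bool_eq_iff add_row_col_def
      using ab sab by (cases "i = a"; cases "j = a"; cases "A a a"; cases "A b b"; cases "A b a"; simp)
  qed
  have 1: "det_bit (\<lambda>i j. K i j + (if i = a then K b j else 0)) X = det_bit K X + det_bit (\<lambda>i j. if i = a then K b j else K i j) X"
    by (rule det_bit_row_add[OF X]) simp_all
  have 2: "det_bit K X = det_bit B X + det_bit (\<lambda>i j. if j = a then B i b else B i j) X"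
    by (rule det_bit_col_add[OF X]) (simp_all add: K_def)
  have 3: "det_bit (\<lambda>i j. if i = a then K b j else K i j) X =
      det_bit (\<lambda>i j. if i = a then B b j else B i j) X + det_bit (\<lambda>i j. B (if i = a then b else i) (if j = a then b else j)) X"
    by (rule det_bit_col_add[OF X]) (simp_all add: K_def)
  show ?thesis unfolding eq 1 2 3 by (simp only: add.assoc)
qed

lemma det_bit_replace_col_row:
  assumes X: "finite X" "X \<subseteq> V" "b \<in> V" and sym: "\<And>i j. i \<in> V \<Longrightarrow> j \<in> V \<Longrightarrow> B i j = B j i"
  shows "det_bit (\<lambda>i j. if j = a then B i b else B i j) X = det_bit (\<lambda>i j. if i = a then B b j else B i j) X"
proof -
  have "det_bit (\<lambda>i j. if j = a then B i b else B i j) X = det_bit (\<lambda>i j. if i = a then B j b else B j i) X"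
    using det_bit_transpose[OF X(1), of "\<lambda>i j. if j = a then B i b else B i j"] by simp
  also have "\<dots> = det_bit (\<lambda>i j. if i = a then B b j else B i j) X"
    by (rule det_bit_cong) (use X sym in auto)
  finally show ?thesis .
qed

lemma det_bit_add_row_col:
  assumes V: "finite V" "X \<subseteq> V" "a \<in> V" "b \<in> V" "a \<noteq> b"
    and sym: "\<And>i j. i \<in> V \<Longrightarrow> j \<in> V \<Longrightarrow> A i j = A j i"
  shows "det_bit (bit_matrix (add_row_col A a b)) X = det_bit (bit_matrix A) X +
     (if a \<in> X \<and> b \<notin> X then det_bit (bit_matrix A) (insert b (X - {a})) else 0)"
proof -
  define B where "B = bit_matrix A"
  have symB: "\<And>i j. i \<in> V \<Longrightarrow> j \<in> V \<Longrightarrow> B i j = B j i" using sym by (simp add: B_def bit_matrix_def)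
  have fX: "finite X" using V finite_subset by blast
  show ?thesis
  proof (cases "a \<in> X")
    case False
    have "det_bit (bit_matrix (add_row_col A a b)) X = det_bit (bit_matrix A) X"
      by (rule det_bit_cong) (use False in \<open>auto simp: bit_matrix_def add_row_col_def\<close>)
    then show ?thesis using False by simp
  next
    case aX: True
    have ex: "det_bit (bit_matrix (add_row_col A a b)) X = det_bit B X + det_bit (\<lambda>i j. if j = a then B i b else B i j) X
     + det_bit (\<lambda>i j. if i = a then B b j else B i j) X
     + det_bit (\<lambda>i j. B (if i = a then b else i) (if j = a then b else j)) X"
      unfolding B_def by (rule det_bit_add_row_col_expand[OF fX aX V(5)]) (use sym V in auto)
    have CR: "det_bit (\<lambda>i j. if j = a then B i b else B i j) X = det_bit (\<lambda>i j. if i = a then B b j else B i j) X"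
      by (rule det_bit_replace_col_row[OF fX V(2) V(4) symB])
    show ?thesis
    proof (cases "b \<in> X")
      case bX: True
      have R0: "det_bit (\<lambda>i j. if i = a then B b j else B i j) X = 0"
        by (rule det_bit_eq_rows[OF fX aX bX V(5)]) (use V(5) in simp)
      have Q0: "det_bit (\<lambda>i j. B (if i = a then b else i) (if j = a then b else j)) X = 0"
        by (rule det_bit_eq_rows[OF fX aX bX V(5)]) (use V(5) in simp)
      have "det_bit (bit_matrix (add_row_col A a b)) X = det_bit B X" unfolding ex CR R0 Q0 by (simp only: add_0_right)
      then show ?thesis using bX by (simp add: B_def)
    next
      case bX: False
      have inj: "inj_on (\<lambda>i. if i = a then b else i) X" using bX by (auto simp: inj_on_def)
      have img: "(\<lambda>i. if i = a then b else i) ` X = insert b (X - {a})" using aX by auto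
      have Q: "det_bit (\<lambda>i j. B (if i = a then b else i) (if j = a then b else j)) X = det_bit B (insert b (X - {a}))"
        using det_bit_reindex[OF inj, of B] img by simp
      have "det_bit (bit_matrix (add_row_col A a b)) X = det_bit B X + det_bit B (insert b (X - {a}))"
        unfolding ex CR Q by (rule bit_add_add_cancel)
      then show ?thesis using aX bX by (simp add: B_def)
    qed
  qed
qed

lemma det_bit_unit_row_swap:
  assumes X: "finite X" "a \<in> X" "b \<in> X" "a \<noteq> b"
    and sym: "\<And>i j. i \<in> X \<Longrightarrow> j \<in> X \<Longrightarrow> B i j = B j i"
  shows "det_bit (\<lambda>i j. if i = a then of_bool (j = b) else B i j) X =
         det_bit (\<lambda>i j. if i = b then of_bool (j = a) else B i j) X"
proof -
  have "det_bit (\<lambda>i j. if i = a then of_bool (j = b) else B i j) X =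
        det_bit (\<lambda>i j. if j = a then of_bool (i = b) else B j i) X"
    using det_bit_transpose[OF X(1), of "\<lambda>i j. if i = a then of_bool (j = b) else B i j"] by simp
  also have "\<dots> = det_bit (\<lambda>i j. if i = b then of_bool (j = a) else B i j) X"
    unfolding det_bit_def
  proof (rule sum.cong[OF refl])
    fix p assume "p \<in> {p. p permutes X}"
    then have p: "p permutes X" by simp
    have pin: "\<And>i. i \<in> X \<Longrightarrow> p i \<in> X" using p by (simp add: permutes_in_image)
    have pinj: "\<And>i j. p i = p j \<Longrightarrow> i = j" using p by (metis permutes_inverses(2))
    show "(\<Prod>i\<in>X. if p i = a then of_bool (i = b) else B (p i) i) =
          (\<Prod>i\<in>X. if i = b then of_bool (p i = a) else B i (p i))"
    proof (cases "p b = a")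
      case True
      have "(\<Prod>i\<in>X. if p i = a then of_bool (i = b) else B (p i) i) =
            (if p b = a then of_bool (b = b) else B (p b) b) * (\<Prod>i\<in>X-{b}. if p i = a then of_bool (i = b) else B (p i) i)"
        by (rule prod.remove[OF X(1) X(3)])
      also have "(\<Prod>i\<in>X-{b}. if p i = a then of_bool (i = b) else B (p i) i) = (\<Prod>i\<in>X-{b}. B i (p i))"
      proof (rule prod.cong[OF refl])
        fix i assume i: "i \<in> X - {b}"
        then have "p i \<noteq> a" using True pinj by blast
        then show "(if p i = a then of_bool (i = b) else B (p i) i) = B i (p i)"
          using sym[of "p i" i] pin[of i] i by simp
      qed
      finally have l: "(\<Prod>i\<in>X. if p i = a then of_bool (i = b) else B (p i) i) = (\<Prod>i\<in>X-{b}. B i (p i))"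
        by (simp only: True simp_thms(6) if_True of_bool_eq(2) mult_1_left)
      have "(\<Prod>i\<in>X. if i = b then of_bool (p i = a) else B i (p i)) =
            (if b = b then of_bool (p b = a) else B b (p b)) * (\<Prod>i\<in>X-{b}. if i = b then of_bool (p i = a) else B i (p i))"
        by (rule prod.remove[OF X(1) X(3)])
      also have "(\<Prod>i\<in>X-{b}. if i = b then of_bool (p i = a) else B i (p i)) = (\<Prod>i\<in>X-{b}. B i (p i))"
        by (rule prod.cong[OF refl]) auto
      finally show ?thesis unfolding l
        by (simp only: True simp_thms(6) if_True of_bool_eq(2) mult_1_left)
    next
      case False
      have r: "(\<Prod>i\<in>X. if i = b then of_bool (p i = a) else B i (p i)) = 0"
        using X False by (intro prod_zero) auto
      have ia: "Hilbert_Choice.inv p a \<in> X" "p (Hilbert_Choice.inv p a) = a" using p X by (auto simp: permutes_inverses permutes_inv permutes_in_image)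
      have "Hilbert_Choice.inv p a \<noteq> b" using ia False by auto
      then have l: "(\<Prod>i\<in>X. if p i = a then of_bool (i = b) else B (p i) i) = 0"
        using X ia by (intro prod_zero) (auto intro!: bexI[of _ "Hilbert_Choice.inv p a"])
      show ?thesis using l r by simp
    qed
  qed
  finally show ?thesis .
qed

lemma det_bit_two_unit_rows:
  assumes X: "finite X" "a \<in> X" "b \<in> X" "a \<noteq> b"
  shows "det_bit (\<lambda>i j. if i = a then of_bool (j = b) else if i = b then of_bool (j = a) else B i j) X =
         det_bit B (X - {a, b})"
proof -
  let ?W = "\<lambda>i j. if i = a then of_bool (j = b) else if i = b then of_bool (j = a) else B i j"
  let ?Y = "X - {a, b}"
  let ?g = "\<lambda>p. \<Prod>i\<in>?Y. B i (p i)"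
  let ?t = "transpose a b"
  have fin: "finite {p. p permutes X}" using X by (simp add: finite_permutations)
  have e: "\<And>p. (\<Prod>i\<in>X. ?W i (p i)) = (if p a = b \<and> p b = a then ?g p else 0)"
  proof -
    fix p :: "'a \<Rightarrow> 'a"
    have "(\<Prod>i\<in>X. ?W i (p i)) = ?W a (p a) * (\<Prod>i\<in>X - {a}. ?W i (p i))"
      by (rule prod.remove[OF X(1) X(2)])
    also have "(\<Prod>i\<in>X - {a}. ?W i (p i)) = ?W b (p b) * (\<Prod>i\<in>X - {a} - {b}. ?W i (p i))"
      by (rule prod.remove) (use X in auto)
    also have "(\<Prod>i\<in>X - {a} - {b}. ?W i (p i)) = ?g p"
      by (rule prod.cong) auto
    finally have "(\<Prod>i\<in>X. ?W i (p i)) = of_bool (p a = b) * (of_bool (p b = a) * ?g p)"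
      using X(4) by (simp only: if_True if_False simp_thms(6) not_sym[OF X(4)])
    then show "(\<Prod>i\<in>X. ?W i (p i)) = (if p a = b \<and> p b = a then ?g p else 0)"
      by (simp only: of_bool_mult_bit)
  qed
  have "det_bit ?W X = (\<Sum>p | p permutes X. if p a = b \<and> p b = a then ?g p else 0)"
    unfolding det_bit_def e ..
  also have "\<dots> = sum ?g {p \<in> {p. p permutes X}. p a = b \<and> p b = a}"
    by (rule sum.inter_filter[OF fin, symmetric])
  also have "\<dots> = sum ?g {q. q permutes ?Y}"
  proof (rule sum.reindex_bij_witness[where i = "\<lambda>q. ?t \<circ> q" and j = "\<lambda>p. ?t \<circ> p"])
    fix q assume q: "q \<in> {q. q permutes ?Y}"
    then have q': "q permutes ?Y" by simp
    show "?t \<circ> (?t \<circ> q) = q" by (simp add: comp_assoc[symmetric])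
    have qX: "q permutes X" by (rule permutes_subset[OF q']) auto
    have qa: "q a = a" "q b = b" using q' by (auto intro: permutes_not_in)
    show "?t \<circ> q \<in> {p \<in> {p. p permutes X}. p a = b \<and> p b = a}"
      using qa X by (auto intro!: permutes_compose[OF qX] permutes_swap_id)
  next
    fix p assume p: "p \<in> {p \<in> {p. p permutes X}. p a = b \<and> p b = a}"
    show "?t \<circ> (?t \<circ> p) = p" by (simp add: comp_assoc[symmetric])
    have pp: "p permutes X" "p a = b" "p b = a" using p by auto
    have pin: "\<And>i. i \<in> ?Y \<Longrightarrow> p i \<in> ?Y"
    proof -
      fix i assume i: "i \<in> ?Y"
      have "p i \<in> X" using i pp(1) permutes_in_image by fastforce
      moreover have "p i \<noteq> b" "p i \<noteq> a" using i pp by (metis DiffD2 insertCI permutes_inverses(2))+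
      ultimately show "p i \<in> ?Y" by simp
    qed
    show "?g (?t \<circ> p) = ?g p"
      by (rule prod.cong[OF refl]) (use pin in \<open>auto simp: transpose_def\<close>)
    have tp: "?t \<circ> p permutes X" using p X by (auto intro!: permutes_compose permutes_swap_id)
    show "?t \<circ> p \<in> {q. q permutes ?Y}"
      using p by (auto intro!: permutes_superset[OF tp])
  qed
  finally show ?thesis unfolding det_bit_def .
qed

lemma det_bit_toggle_edge:
  assumes V: "finite V" "X \<subseteq> V" "a \<in> V" "b \<in> V" "a \<noteq> b"
    and sym: "\<And>i j. i \<in> V \<Longrightarrow> j \<in> V \<Longrightarrow> A i j = A j i"
  shows "det_bit (bit_matrix (toggle_edge A a b)) X = det_bit (bit_matrix A) X +
     (if a \<in> X \<and> b \<in> X then det_bit (bit_matrix A) (X - {a, b}) else 0)"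
proof -
  define B where "B = bit_matrix A"
  have symB: "\<And>i j. i \<in> X \<Longrightarrow> j \<in> X \<Longrightarrow> B i j = B j i" using sym V by (auto simp: B_def bit_matrix_def)
  have fX: "finite X" using V finite_subset by blast
  show ?thesis
  proof (cases "a \<in> X \<and> b \<in> X")
    case False
    have "det_bit (bit_matrix (toggle_edge A a b)) X = det_bit (bit_matrix A) X"
      by (rule det_bit_cong) (use False in \<open>auto simp: bit_matrix_def toggle_edge_def\<close>)
    then show ?thesis by (simp only: if_not_P[OF False] add_0_right)
  next
    case True
    then have aX: "a \<in> X" and bX: "b \<in> X" by auto
    define G where "G i j = B i j + of_bool (i = b \<and> j = a)" for i j
    have eq: "bit_matrix (toggle_edge A a b) = (\<lambda>i j. G i j + of_bool (i = a \<and> j = b))"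
    proof (intro ext)
      fix i j
      show "bit_matrix (toggle_edge A a b) i j = G i j + of_bool (i = a \<and> j = b)"
        unfolding G_def B_def bit_matrix_def of_bool_add_bit of_bool_eq_iff toggle_edge_def
        using V(5) by (cases "i = a"; cases "j = a"; cases "i = b"; cases "j = b"; simp)
    qed
    have 1: "det_bit (\<lambda>i j. G i j + of_bool (i = a \<and> j = b)) X = det_bit G X + det_bit (\<lambda>i j. if i = a then of_bool (j = b) else G i j) X"
      by (rule det_bit_row_add[OF fX aX]) simp_all
    have 2: "det_bit G X = det_bit B X + det_bit (\<lambda>i j. if i = b then of_bool (j = a) else B i j) X"
      by (rule det_bit_row_add[OF fX bX]) (simp_all add: G_def)
    have 3: "det_bit (\<lambda>i j. if i = a then of_bool (j = b) else G i j) X =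
        det_bit (\<lambda>i j. if i = a then of_bool (j = b) else B i j) X +
        det_bit (\<lambda>i j. if i = a then of_bool (j = b) else if i = b then of_bool (j = a) else B i j) X"
      by (rule det_bit_row_add[OF fX bX]) (use V(5) in \<open>simp_all add: G_def\<close>)
    have "det_bit (bit_matrix (toggle_edge A a b)) X = det_bit B X + det_bit (\<lambda>i j. if i = b then of_bool (j = a) else B i j) X +
        det_bit (\<lambda>i j. if i = a then of_bool (j = b) else B i j) X +
        det_bit (\<lambda>i j. if i = a then of_bool (j = b) else if i = b then of_bool (j = a) else B i j) X"
      unfolding eq 1 2 3 by (simp only: add.assoc)
    also have "\<dots> = det_bit B X + det_bit (\<lambda>i j. if i = b then of_bool (j = a) else B i j) X +
        det_bit (\<lambda>i j. if i = b then of_bool (j = a) else B i j) X + det_bit B (X - {a, b})"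
      by (simp only: det_bit_unit_row_swap[OF fX aX bX V(5) symB] det_bit_two_unit_rows[OF fX aX bX V(5)])
    finally have "det_bit (bit_matrix (toggle_edge A a b)) X = det_bit B X + det_bit B (X - {a, b})"
      by (simp only: bit_add_add_cancel)
    then show ?thesis unfolding B_def by (simp only: if_P[OF True])
  qed
qed

section \<open>Principal pivoting\<close>

definition matvec :: "('a \<Rightarrow> 'a \<Rightarrow> bit) \<Rightarrow> 'a set \<Rightarrow> ('a \<Rightarrow> bit) \<Rightarrow> 'a \<Rightarrow> bit" where
  "matvec M V u i = (\<Sum>k\<in>V. M i k * u k)"

text \<open>M' is the principal pivot transform of M on S: exchanging the S-coordinates of input and
  output turns the linear map of M into that of M'.\<close>

definition principal_pivot :: "'a set \<Rightarrow> 'a set \<Rightarrow> ('a \<Rightarrow> 'a \<Rightarrow> bit) \<Rightarrow> ('a \<Rightarrow> 'a \<Rightarrow> bit) \<Rightarrow> bool" where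
  "principal_pivot V S M M' \<longleftrightarrow> (\<forall>u. (\<forall>i. i \<notin> V \<longrightarrow> u i = 0) \<longrightarrow> (\<forall>i\<in>V.
     (if i \<in> S then u i else matvec M V u i) = matvec M' V (\<lambda>k. if k \<in> S then matvec M V u k else u k) i))"

lemma sum_mult_eq_on_support:
  assumes "finite V" "Y \<subseteq> V" "\<And>k. k \<notin> Y \<Longrightarrow> u k = 0"
  shows "(\<Sum>k\<in>V. M i k * u k) = (\<Sum>k\<in>Y. M i k * (u k :: bit))"
  by (rule sum.mono_neutral_right) (use assms in auto)

lemma symdiff_symdiff [simp]: "symdiff (symdiff X S) S = X"
  by (auto simp: symdiff_def)

lemma kernel_trivial_principal_pivot:
  assumes fin: "finite V" "S \<subseteq> V" "Y \<subseteq> V"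
    and H: "principal_pivot V S M M'" and nd: "kernel_trivial M' (symdiff Y S)"
  shows "kernel_trivial M Y"
  unfolding kernel_trivial_def
proof (intro allI impI)
  fix u i assume u0: "\<forall>i. i \<notin> Y \<longrightarrow> u i = 0" and uk: "\<forall>i\<in>Y. (\<Sum>j\<in>Y. M i j * u j) = 0"
  let ?Z = "symdiff Y S"
  define u' where "u' k = (if k \<in> S then matvec M V u k else u k)" for k
  have mvY: "\<And>i. matvec M V u i = (\<Sum>j\<in>Y. M i j * u j)"
    unfolding matvec_def by (rule sum_mult_eq_on_support) (use fin u0 in auto)
  have H': "\<And>i. i \<in> V \<Longrightarrow> (if i \<in> S then u i else matvec M V u i) = matvec M' V u' i"
    using H u0 fin unfolding principal_pivot_def u'_def by blast
  have ZV: "?Z \<subseteq> V" using fin by (auto simp: symdiff_def)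
  have a: "\<forall>i. i \<notin> ?Z \<longrightarrow> u' i = 0"
    using u0 uk mvY by (auto simp: u'_def symdiff_def)
  have b: "\<forall>i\<in>?Z. (\<Sum>j\<in>?Z. M' i j * u' j) = 0"
  proof
    fix i assume i: "i \<in> ?Z"
    have "(\<Sum>j\<in>?Z. M' i j * u' j) = matvec M' V u' i"
      unfolding matvec_def by (rule sum_mult_eq_on_support[symmetric]) (use fin ZV a in auto)
    also have "\<dots> = (if i \<in> S then u i else matvec M V u i)"
      using H'[of i] i ZV by (simp add: subset_iff)
    also have "\<dots> = 0" using i u0 uk mvY by (auto simp: symdiff_def)
    finally show "(\<Sum>j\<in>?Z. M' i j * u' j) = 0" .
  qed
  have u'0: "\<forall>i. u' i = 0" using nd a b unfolding kernel_trivial_def by blast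
  show "u i = 0"
  proof (cases "i \<in> S")
    case True
    then have "i \<in> V" using fin by auto
    have "matvec M' V u' i = 0" using u'0 by (simp add: matvec_def)
    then show ?thesis using H'[OF \<open>i \<in> V\<close>] True by simp
  next
    case False
    then show ?thesis using u'0[rule_format, of i] by (simp add: u'_def)
  qed
qed

lemma kernel_trivial_principal_pivot_iff:
  assumes fin: "finite V" "S \<subseteq> V" "X \<subseteq> V"
    and H: "principal_pivot V S M M'" "principal_pivot V S M' M"
  shows "kernel_trivial M' X \<longleftrightarrow> kernel_trivial M (symdiff X S)"
proof
  assume "kernel_trivial M' X"
  moreover have "symdiff X S \<subseteq> V" using fin by (auto simp: symdiff_def)
  ultimately show "kernel_trivial M (symdiff X S)"
    using kernel_trivial_principal_pivot[OF fin(1,2) _ H(1), of "symdiff X S"] by simp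
next
  assume "kernel_trivial M (symdiff X S)"
  then show "kernel_trivial M' X"
    by (rule kernel_trivial_principal_pivot[OF fin H(2)])
qed

lemma matvec_remove: "finite V \<Longrightarrow> e \<in> V \<Longrightarrow> matvec N V v i = N i e * v e + (\<Sum>k\<in>V-{e}. N i k * v k)"
  unfolding matvec_def by (rule sum.remove)

lemma matvec_remove2:
  assumes "finite V" "e \<in> V" "f \<in> V" "e \<noteq> f"
  shows "matvec N V v i = N i e * v e + N i f * v f + (\<Sum>k\<in>V-{e,f}. N i k * v k)"
proof -
  have "matvec N V v i = N i e * v e + (\<Sum>k\<in>V-{e}. N i k * v k)" by (rule matvec_remove[OF assms(1,2)])
  also have "(\<Sum>k\<in>V-{e}. N i k * v k) = N i f * v f + (\<Sum>k\<in>V-{e}-{f}. N i k * v k)"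
    by (rule sum.remove) (use assms in auto)
  also have "V - {e} - {f} = V - {e, f}" by auto
  finally show ?thesis by (simp only: add.assoc)
qed

text \<open>The principal pivot transforms on a nonsingular principal submatrix of size one (a vertex
  with framing 1) and of size two (an edge between two vertices, the first with framing 0).\<close>

definition pivot_loop :: "('a \<Rightarrow> 'a \<Rightarrow> bool) \<Rightarrow> 'a \<Rightarrow> 'a \<Rightarrow> 'a \<Rightarrow> bool" where
  "pivot_loop A e i j = (if i = e \<or> j = e then A i j else A i j \<noteq> (A i e \<and> A e j))"

definition pivot_edge :: "('a \<Rightarrow> 'a \<Rightarrow> bool) \<Rightarrow> 'a \<Rightarrow> 'a \<Rightarrow> 'a \<Rightarrow> 'a \<Rightarrow> bool" where
  "pivot_edge A e f i k = (let c = A f f in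
     if i = e \<and> k = e then c
     else if (i = e \<and> k = f) \<or> (i = f \<and> k = e) then True
     else if i = f \<and> k = f then False
     else if i = e then (c \<and> A e k) \<noteq> A f k
     else if k = e then (c \<and> A i e) \<noteq> A i f
     else if i = f then A e k
     else if k = f then A i e
     else ((A i k \<noteq> (c \<and> A i e \<and> A e k)) \<noteq> ((A i e \<and> A f k) \<noteq> (A i f \<and> A e k))))"

lemma principal_pivot_pivot_loop:
  assumes V: "finite V" "e \<in> V" and Aee: "A e e"
  shows "principal_pivot V {e} (bit_matrix A) (bit_matrix (pivot_loop A e))"
  unfolding principal_pivot_def
proof (intro allI impI ballI)
  fix u :: "'a \<Rightarrow> bit" and i assume i: "i \<in> V"
  define B where "B = bit_matrix A"
  define B' where "B' = bit_matrix (pivot_loop A e)"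
  define u' where "u' = (\<lambda>k. if k \<in> {e} then matvec B V u k else u k)"
  define U where "U = (\<Sum>k\<in>V-{e}. B e k * u k)"
  have Bee: "B e e = 1" using Aee by (simp add: B_def bit_matrix_def)
  have u'e: "u' e = u e + U" unfolding u'_def matvec_remove[OF V] Bee U_def by simp
  have sR: "(\<Sum>k\<in>V-{e}. B' i k * u' k) = (\<Sum>k\<in>V-{e}. B' i k * u k)"
    by (rule sum.cong) (auto simp: u'_def)
  show "(if i \<in> {e} then u i else matvec B V u i) = matvec B' V u' i"
  proof (cases "i = e")
    case True
    have "(\<Sum>k\<in>V-{e}. B' e k * u k) = U" unfolding U_def
      by (rule sum.cong) (auto simp: B'_def B_def bit_matrix_def pivot_loop_def)
    moreover have "B' e e = 1" using Aee by (simp add: B'_def bit_matrix_def pivot_loop_def)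
    moreover have "(x::bit) = (x + U) + U" for x by (simp only: add.assoc bit_add_self add_0_right)
    ultimately show ?thesis using True unfolding matvec_remove[OF V, of B' u'] sR u'e
      by (simp only: mult_1_left singleton_iff simp_thms(6) if_True)
  next
    case False
    have "(\<Sum>k\<in>V-{e}. B' i k * u k) = (\<Sum>k\<in>V-{e}. B i k * u k + B i e * (B e k * u k))"
      by (rule sum.cong) (use False in \<open>auto simp: B'_def B_def bit_matrix_def of_bool_add_bit pivot_loop_def\<close>)
    also have "\<dots> = (\<Sum>k\<in>V-{e}. B i k * u k) + B i e * U"
      unfolding U_def sum_distrib_left by (rule sum.distrib)
    finally have s: "(\<Sum>k\<in>V-{e}. B' i k * u k) = (\<Sum>k\<in>V-{e}. B i k * u k) + B i e * U" .
    have "B' i e = B i e" using False by (simp add: B'_def B_def bit_matrix_def pivot_loop_def)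
    moreover have "(b::bit) * x + S = b * (x + U) + (S + b * U)" for b x S
      by (cases b; cases x; cases S; cases U) simp_all
    ultimately show ?thesis using False unfolding matvec_remove[OF V, of B' u'] matvec_remove[OF V, of B u] sR u'e s
      by (simp only: singleton_iff if_False)
  qed
qed

lemma bit_matrix_pivot_edge:
  fixes A :: "'a \<Rightarrow> 'a \<Rightarrow> bool"
  assumes "e \<noteq> f"
  defines "B \<equiv> bit_matrix A" and "B' \<equiv> bit_matrix (pivot_edge A e f)"
  shows "B' e e = B f f" "B' e f = 1" "B' f e = 1" "B' f f = 0"
    "k \<notin> {e, f} \<Longrightarrow> B' e k = B f f * B e k + B f k"
    "k \<notin> {e, f} \<Longrightarrow> B' f k = B e k"
    "i \<notin> {e, f} \<Longrightarrow> B' i e = B f f * B i e + B i f"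
    "i \<notin> {e, f} \<Longrightarrow> B' i f = B i e"
    "i \<notin> {e, f} \<Longrightarrow> k \<notin> {e, f} \<Longrightarrow>
      B' i k = B i k + B f f * B i e * B e k + B i e * B f k + B i f * B e k"
  using assms by (auto simp: bit_matrix_def of_bool_add_bit pivot_edge_def Let_def)

lemma principal_pivot_pivot_edge:
  assumes V: "finite V" "e \<in> V" "f \<in> V" "e \<noteq> f" and A: "\<not> A e e" "A e f" "A f e"
  shows "principal_pivot V {e, f} (bit_matrix A) (bit_matrix (pivot_edge A e f))"
  unfolding principal_pivot_def
proof (intro allI impI ballI)
  fix u :: "'a \<Rightarrow> bit" and i assume i: "i \<in> V"
  define B where "B = bit_matrix A"
  define B' where "B' = bit_matrix (pivot_edge A e f)"
  define u' where "u' = (\<lambda>k. if k \<in> {e, f} then matvec B V u k else u k)"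
  define R where "R = V - {e, f}"
  define Ue where "Ue = (\<Sum>k\<in>R. B e k * u k)"
  define Uf where "Uf = (\<Sum>k\<in>R. B f k * u k)"
  note mr = matvec_remove2[OF V, folded R_def]
  note entries = bit_matrix_pivot_edge[OF V(4), where A = A, folded B_def B'_def]
  have Bv: "B e e = 0" "B e f = 1" "B f e = 1" using A by (simp_all add: B_def bit_matrix_def)
  have u'e: "u' e = u f + Ue" unfolding u'_def mr Bv Ue_def by simp
  have u'f: "u' f = u e + B f f * u f + Uf" using V(4) unfolding u'_def mr Bv Uf_def by simp
  have sR: "\<And>N. (\<Sum>k\<in>R. N k * u' k) = (\<Sum>k\<in>R. N k * u k)"
    by (rule sum.cong) (auto simp: u'_def R_def)
  have Rk: "\<And>k. k \<in> R \<Longrightarrow> k \<notin> {e, f}" by (simp add: R_def)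
  consider "i = e" | "i = f" | "i \<in> R" using i by (auto simp: R_def)
  then show "(if i \<in> {e, f} then u i else matvec B V u i) = matvec B' V u' i"
  proof cases
    case 1
    have "(\<Sum>k\<in>R. B' e k * u k) = (\<Sum>k\<in>R. B f f * (B e k * u k) + B f k * u k)"
      using entries(5)[OF Rk] by (intro sum.cong refl) (simp only: distrib_right mult.assoc)
    also have "\<dots> = B f f * Ue + Uf" unfolding Ue_def Uf_def sum_distrib_left by (rule sum.distrib)
    finally have s: "(\<Sum>k\<in>R. B' e k * u k) = B f f * Ue + Uf" .
    have "(ue::bit) = B f f * (uf + Ue) + (ue + B f f * uf + Uf) + (B f f * Ue + Uf)" for ue uf
      by (cases "B f f"; cases ue; cases uf; cases Ue; cases Uf) simp_all
    then show ?thesis unfolding 1 mr[of B' u' e] sR entries(1,2) u'e u'f s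
      by (simp only: insert_iff simp_thms if_True mult_1_left)
  next
    case 2
    have s: "(\<Sum>k\<in>R. B' f k * u k) = Ue"
      unfolding Ue_def using entries(6)[OF Rk] by (intro sum.cong refl) simp
    have "(uf::bit) = (uf + Ue) + 0 * x + Ue" for uf x
      by (cases uf; cases Ue) simp_all
    then show ?thesis unfolding 2 mr[of B' u' f] sR entries(3,4) u'e u'f s
      by (simp only: insert_iff simp_thms if_True mult_1_left)
  next
    case 3
    then have ie: "i \<notin> {e, f}" by (simp add: R_def)
    have "(\<Sum>k\<in>R. B' i k * u k) = (\<Sum>k\<in>R. B i k * u k + B f f * (B i e * (B e k * u k)) + B i e * (B f k * u k) + B i f * (B e k * u k))"
      using entries(9)[OF ie Rk] by (intro sum.cong refl) (simp only: distrib_right mult.assoc)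
    also have "\<dots> = (\<Sum>k\<in>R. B i k * u k) + B f f * (B i e * Ue) + B i e * Uf + B i f * Ue"
      unfolding Ue_def Uf_def sum_distrib_left sum.distrib ..
    finally have s: "(\<Sum>k\<in>R. B' i k * u k) = (\<Sum>k\<in>R. B i k * u k) + B f f * (B i e * Ue) + B i e * Uf + B i f * Ue" .
    have "(bie::bit) * ue + bif * uf + Ui =
       (B f f * bie + bif) * (uf + Ue) + bie * (ue + B f f * uf + Uf) + (Ui + B f f * (bie * Ue) + bie * Uf + bif * Ue)"
      for bie bif ue uf Ui
      by (cases "B f f"; cases ue; cases uf; cases Ue; cases Uf; cases bie; cases bif; cases Ui) simp_all
    then show ?thesis using ie
      unfolding mr[of B' u' i] mr[of B u i] sR entries(7,8)[OF ie] u'e u'f s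
      by (simp only: insert_iff empty_iff simp_thms if_False)
  qed
qed

lemma framed_graph_sym: "framed_graph V A \<Longrightarrow> i \<in> V \<Longrightarrow> j \<in> V \<Longrightarrow> A i j = A j i"
  by (simp add: framed_graph_def)

lemma framed_graph_pivot_loop:
  assumes fr: "framed_graph V A" and e: "e \<in> V"
  shows "framed_graph V (pivot_loop A e)"
  unfolding framed_graph_def
proof (intro conjI ballI)
  show "finite V" using fr by (simp add: framed_graph_def)
  fix i j assume ij: "i \<in> V" "j \<in> V"
  note s = framed_graph_sym[OF fr]
  show "pivot_loop A e i j = pivot_loop A e j i"
    using s[OF ij] s[OF ij(1) e] s[OF ij(2) e] unfolding pivot_loop_def by auto
qed

lemma framed_graph_pivot_edge:
  assumes fr: "framed_graph V A" and ef: "e \<in> V" "f \<in> V"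
  shows "framed_graph V (pivot_edge A e f)"
  unfolding framed_graph_def
proof (intro conjI ballI)
  show "finite V" using fr by (simp add: framed_graph_def)
  fix i j assume ij: "i \<in> V" "j \<in> V"
  note s = framed_graph_sym[OF fr]
  show "pivot_edge A e f i j = pivot_edge A e f j i"
    using s[OF ij] s[OF ij(1) ef(1)] s[OF ij(1) ef(2)] s[OF ij(2) ef(1)] s[OF ij(2) ef(2)] s[OF ef]
    unfolding pivot_edge_def Let_def by auto
qed

lemma pivot_loop_pivot_loop [simp]: "pivot_loop (pivot_loop A e) e = A"
  unfolding pivot_loop_def by (auto simp: fun_eq_iff)

lemma pivot_edge_pivot_edge:
  assumes "e \<noteq> f" "\<not> A e e" "A e f" "A f e"
  shows "pivot_edge (pivot_edge A e f) f e = A"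
  using assms unfolding pivot_edge_def Let_def by (auto simp: fun_eq_iff)

lemma det_F2_nonzero_iff_kernel_trivial: "finite X \<Longrightarrow> det_F2 A X \<noteq> 0 \<longleftrightarrow> kernel_trivial (bit_matrix A) X"
  unfolding det_F2_eq_det_bit by (rule det_bit_nonzero_iff_kernel_trivial)

lemma det_F2_principal_pivot:
  assumes V: "finite V" "S \<subseteq> V" "Y \<subseteq> V"
    and H: "principal_pivot V S (bit_matrix A) (bit_matrix A')" "principal_pivot V S (bit_matrix A') (bit_matrix A)"
  shows "det_F2 A' Y \<noteq> 0 \<longleftrightarrow> det_F2 A (symdiff Y S) \<noteq> 0"
proof -
  have "finite Y" "finite (symdiff Y S)" using V by (auto intro: finite_subset simp: symdiff_def)
  show ?thesis
    unfolding det_F2_nonzero_iff_kernel_trivial[OF \<open>finite Y\<close>]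
      det_F2_nonzero_iff_kernel_trivial[OF \<open>finite (symdiff Y S)\<close>]
    by (rule kernel_trivial_principal_pivot_iff[OF V H])
qed

lemma det_F2_pivot_loop:
  assumes V: "finite V" "e \<in> V" "Y \<subseteq> V" and Aee: "A e e"
  shows "det_F2 (pivot_loop A e) Y \<noteq> 0 \<longleftrightarrow> det_F2 A (symdiff Y {e}) \<noteq> 0"
proof (rule det_F2_principal_pivot[OF V(1) _ V(3)])
  show "{e} \<subseteq> V" using V by simp
  show "principal_pivot V {e} (bit_matrix A) (bit_matrix (pivot_loop A e))"
    by (rule principal_pivot_pivot_loop[of V e A, OF V(1,2) Aee])
  have "pivot_loop A e e e" using Aee by (simp add: pivot_loop_def)
  from principal_pivot_pivot_loop[of V e "pivot_loop A e", OF V(1,2) this]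
  show "principal_pivot V {e} (bit_matrix (pivot_loop A e)) (bit_matrix A)" by simp
qed

lemma det_F2_pivot_edge:
  assumes V: "finite V" "e \<in> V" "f \<in> V" "e \<noteq> f" "Y \<subseteq> V" and A: "\<not> A e e" "A e f" "A f e"
  shows "det_F2 (pivot_edge A e f) Y \<noteq> 0 \<longleftrightarrow> det_F2 A (symdiff Y {e, f}) \<noteq> 0"
proof (rule det_F2_principal_pivot[OF V(1) _ V(5)])
  show "{e, f} \<subseteq> V" using V by simp
  show "principal_pivot V {e, f} (bit_matrix A) (bit_matrix (pivot_edge A e f))"
    by (rule principal_pivot_pivot_edge[OF V(1-4) A])
  have "\<not> pivot_edge A e f f f" "pivot_edge A e f f e" "pivot_edge A e f e f"
    using V(4) by (auto simp: pivot_edge_def Let_def)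
  from principal_pivot_pivot_edge[OF V(1,3,2) V(4)[symmetric] this]
  show "principal_pivot V {e, f} (bit_matrix (pivot_edge A e f)) (bit_matrix A)"
    unfolding pivot_edge_pivot_edge[OF V(4) A] insert_commute[of f e] .
qed

lemma exists_edge_in_nonsingular:
  assumes fr: "framed_graph V A" and X: "X \<subseteq> V" "e \<in> X" and d: "det_F2 A X \<noteq> 0"
    and nl: "\<not> A e e"
  shows "\<exists>f\<in>X. A e f"
proof (rule ccontr)
  assume "\<not> (\<exists>f\<in>X. A e f)"
  then have z: "\<And>f. f \<in> X \<Longrightarrow> \<not> A f e" using framed_graph_sym[OF fr] X by blast
  have fX: "finite X" using fr X by (auto simp: framed_graph_def intro: finite_subset)
  define v :: "'a \<Rightarrow> bit" where "v i = of_bool (i = e)" for i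
  have "\<forall>i\<in>X. (\<Sum>j\<in>X. bit_matrix A i j * v j) = 0"
  proof
    fix i assume i: "i \<in> X"
    have "(\<Sum>j\<in>X. bit_matrix A i j * v j) = bit_matrix A i e * v e + (\<Sum>j\<in>X-{e}. bit_matrix A i j * v j)"
      by (rule sum.remove[OF fX X(2)])
    also have "(\<Sum>j\<in>X-{e}. bit_matrix A i j * v j) = 0" by (rule sum.neutral) (simp add: v_def)
    finally show "(\<Sum>j\<in>X. bit_matrix A i j * v j) = 0" using z[OF i] by (simp add: v_def bit_matrix_def)
  qed
  moreover have "\<forall>i. i \<notin> X \<longrightarrow> v i = 0" using X(2) by (auto simp: v_def)
  moreover have "v e \<noteq> 0" by (simp add: v_def)
  ultimately have "\<not> kernel_trivial (bit_matrix A) X" unfolding kernel_trivial_def by blast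
  then show False using d det_F2_nonzero_iff_kernel_trivial[OF fX] by blast
qed

text \<open>Every nonempty nonsingular principal submatrix contains a nonsingular principal submatrix of
  size one or two through any of its elements, on which we can pivot.\<close>

lemma elementary_pivot:
  assumes fr: "framed_graph V A" and X: "X \<subseteq> V" "e \<in> X" and d: "det_F2 A X \<noteq> 0"
  obtains A' S where "framed_graph V A'" "e \<in> S" "S \<subseteq> X"
    "\<And>Y. Y \<subseteq> V \<Longrightarrow> det_F2 A' Y \<noteq> 0 \<longleftrightarrow> det_F2 A (symdiff Y S) \<noteq> 0"
proof (cases "A e e")
  case True
  have V: "finite V" "e \<in> V" using fr X by (auto simp: framed_graph_def)
  show ?thesis
  proof (rule that)
    show "framed_graph V (pivot_loop A e)" by (rule framed_graph_pivot_loop[OF fr V(2)])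
    show "det_F2 (pivot_loop A e) Y \<noteq> 0 \<longleftrightarrow> det_F2 A (symdiff Y {e}) \<noteq> 0" if "Y \<subseteq> V" for Y
      by (rule det_F2_pivot_loop[of V e Y A, OF V that True])
  qed (use X in auto)
next
  case False
  obtain f where f: "f \<in> X" "A e f" using exists_edge_in_nonsingular[OF fr X d False] by blast
  have V: "finite V" "e \<in> V" "f \<in> V" "e \<noteq> f" using fr X f False by (auto simp: framed_graph_def)
  have "A f e" using f framed_graph_sym[OF fr V(2,3)] by simp
  show ?thesis
  proof (rule that)
    show "framed_graph V (pivot_edge A e f)" by (rule framed_graph_pivot_edge[OF fr V(2,3)])
    show "det_F2 (pivot_edge A e f) Y \<noteq> 0 \<longleftrightarrow> det_F2 A (symdiff Y {e, f}) \<noteq> 0" if "Y \<subseteq> V" for Y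
      by (rule det_F2_pivot_edge[of V e f Y A, OF V that False f(2) \<open>A f e\<close>])
  qed (use X f in auto)
qed

section \<open>Set systems: sliding, twisting and minors\<close>

lemma fst_twist [simp]: "fst (twist D T) = fst D"
  by (simp add: twist_def)

lemma fst_slide [simp]: "fst (slide D a b) = fst D"
  by (simp add: slide_def)

lemma fst_exch [simp]: "fst (exch D a b) = fst D"
  by (simp add: exch_def)

lemma fst_del [simp]: "fst (del D e) = fst D - {e}"
  by (simp add: del_def contr_def)

lemma fst_contr [simp]: "fst (contr D e) = fst D - {e}"
  by (simp add: contr_def)

lemma mem_symdiff: "Z \<in> symdiff P Q \<longleftrightarrow> (Z \<in> P) \<noteq> (Z \<in> Q)"
  by (auto simp: symdiff_def)

lemma symdiff_assoc: "symdiff (symdiff X T) B = symdiff X (symdiff T B)"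
  by (auto simp: symdiff_def)

lemma mem_image_symdiff: "Z \<in> (\<lambda>X. symdiff X T) ` S \<longleftrightarrow> symdiff Z T \<in> S"
proof
  assume "symdiff Z T \<in> S"
  then show "Z \<in> (\<lambda>X. symdiff X T) ` S" by (rule image_eqI[rotated]) simp
qed auto

lemma mem_twist: "Z \<in> snd (twist D T) \<longleftrightarrow> symdiff Z T \<in> snd D"
  unfolding twist_def snd_conv by (rule mem_image_symdiff)

lemma twist_twist: "twist (twist D T) T' = twist D (symdiff T T')"
  by (simp add: twist_def image_image symdiff_assoc)

lemma mem_slide:
  assumes "a \<noteq> b"
  shows "Z \<in> snd (slide D a b) \<longleftrightarrow>
    (Z \<in> snd D) \<noteq> (a \<in> Z \<and> b \<notin> Z \<and> Z - {a} \<subseteq> fst D \<and> insert b (Z - {a}) \<in> snd D)"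
proof -
  have "Z \<in> {\<psi> \<union> {a} | \<psi>. \<psi> \<subseteq> fst D - {a, b} \<and> \<psi> \<union> {b} \<in> snd D} \<longleftrightarrow>
    a \<in> Z \<and> b \<notin> Z \<and> Z - {a} \<subseteq> fst D \<and> insert b (Z - {a}) \<in> snd D"
  proof
    assume "Z \<in> {\<psi> \<union> {a} | \<psi>. \<psi> \<subseteq> fst D - {a, b} \<and> \<psi> \<union> {b} \<in> snd D}"
    then obtain \<psi> where p: "Z = \<psi> \<union> {a}" "\<psi> \<subseteq> fst D - {a, b}" "\<psi> \<union> {b} \<in> snd D" by blast
    have "insert b (Z - {a}) = \<psi> \<union> {b}" "Z - {a} = \<psi>" using p by auto
    then show "a \<in> Z \<and> b \<notin> Z \<and> Z - {a} \<subseteq> fst D \<and> insert b (Z - {a}) \<in> snd D" using p assms by auto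
  next
    assume Z: "a \<in> Z \<and> b \<notin> Z \<and> Z - {a} \<subseteq> fst D \<and> insert b (Z - {a}) \<in> snd D"
    have "Z = (Z - {a}) \<union> {a}" "Z - {a} \<subseteq> fst D - {a, b}" "(Z - {a}) \<union> {b} \<in> snd D" using Z by auto
    then show "Z \<in> {\<psi> \<union> {a} | \<psi>. \<psi> \<subseteq> fst D - {a, b} \<and> \<psi> \<union> {b} \<in> snd D}" by blast
  qed
  then show ?thesis unfolding slide_def snd_conv mem_symdiff by simp
qed

lemma slide_eq_self:
  assumes "\<forall>\<phi>\<in>snd D. a \<in> \<phi>" "a \<noteq> b"
  shows "slide D a b = D"
proof -
  have "snd (slide D a b) = snd D" using assms by (auto simp: mem_slide)
  then show ?thesis by (simp add: prod_eq_iff)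
qed

lemma slide_slide: "a \<noteq> b \<Longrightarrow> slide (slide D a b) a b = D"
proof -
  assume ab: "a \<noteq> b"
  have "snd (slide (slide D a b) a b) = snd D"
  proof (rule Set.set_eqI)
    fix Z
    have "insert b (Z - {a}) \<in> snd (slide D a b) \<longleftrightarrow> insert b (Z - {a}) \<in> snd D"
      unfolding mem_slide[OF ab] by auto
    then show "Z \<in> snd (slide (slide D a b) a b) \<longleftrightarrow> Z \<in> snd D"
      unfolding mem_slide[OF ab, of Z "slide D a b"] mem_slide[OF ab, of Z D] by auto
  qed
  then show ?thesis by (simp add: prod_eq_iff)
qed

definition delete :: "'a setsys \<Rightarrow> 'a \<Rightarrow> 'a setsys" where
  "delete D e = (fst D - {e}, {\<phi> \<in> snd D. e \<notin> \<phi>})"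

definition contract :: "'a setsys \<Rightarrow> 'a \<Rightarrow> 'a setsys" where
  "contract D e = (fst D - {e}, {\<phi> - {e} | \<phi>. \<phi> \<in> snd D \<and> e \<in> \<phi>})"

lemma contr_eq_delete_contract: "contr D e = (if loop D e then delete D e else contract D e)"
  by (simp add: contr_def delete_def contract_def)

lemma del_eq_delete: "del D e = (if coloop D e then contr D e else delete D e)"
  by (simp add: del_def delete_def)

lemma mem_delete: "Z \<in> snd (delete D e) \<longleftrightarrow> Z \<in> snd D \<and> e \<notin> Z"
  by (auto simp: delete_def)

lemma mem_contract: "Z \<in> snd (contract D e) \<longleftrightarrow> e \<notin> Z \<and> insert e Z \<in> snd D"
proof
  assume "Z \<in> snd (contract D e)"
  then obtain \<phi> where "Z = \<phi> - {e}" "\<phi> \<in> snd D" "e \<in> \<phi>" by (auto simp: contract_def)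
  moreover from this have "insert e Z = \<phi>" by auto
  ultimately show "e \<notin> Z \<and> insert e Z \<in> snd D" by simp
next
  assume "e \<notin> Z \<and> insert e Z \<in> snd D"
  then have "Z = insert e Z - {e}" "insert e Z \<in> snd D" "e \<in> insert e Z" by auto
  then show "Z \<in> snd (contract D e)" unfolding contract_def snd_conv by blast
qed

lemma loop_slide1:
  assumes ab: "e \<noteq> a" "e \<noteq> b" "a \<noteq> b" and l: "loop D e"
  shows "loop (slide D a b) e"
  unfolding loop_def
proof (intro ballI notI)
  fix Z assume Z: "Z \<in> snd (slide D a b)" and eZ: "e \<in> Z"
  have l': "\<And>\<phi>. \<phi> \<in> snd D \<Longrightarrow> e \<notin> \<phi>" using l unfolding loop_def by blast
  have 1: "Z \<notin> snd D" using l'[of Z] eZ by blast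
  have "e \<in> insert b (Z - {a})" using eZ ab by simp
  then have 2: "insert b (Z - {a}) \<notin> snd D" using l'[of "insert b (Z - {a})"] by blast
  show False using Z 1 2 unfolding mem_slide[OF ab(3)] by simp
qed

lemma loop_slide:
  assumes ab: "e \<noteq> a" "e \<noteq> b" "a \<noteq> b"
  shows "loop (slide D a b) e \<longleftrightarrow> loop D e"
proof
  assume "loop (slide D a b) e"
  then have "loop (slide (slide D a b) a b) e" by (rule loop_slide1[OF ab])
  then show "loop D e" by (simp only: slide_slide[OF ab(3)])
next
  assume "loop D e"
  then show "loop (slide D a b) e" by (rule loop_slide1[OF ab])
qed

lemma coloop_slide1:
  assumes ab: "e \<noteq> a" "e \<noteq> b" "a \<noteq> b" and l: "coloop D e"
  shows "coloop (slide D a b) e"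
  unfolding coloop_def
proof (rule ballI, rule ccontr)
  fix Z assume Z: "Z \<in> snd (slide D a b)" and eZ: "e \<notin> Z"
  have l': "\<And>\<phi>. \<phi> \<in> snd D \<Longrightarrow> e \<in> \<phi>" using l unfolding coloop_def by blast
  have 1: "Z \<notin> snd D" using l'[of Z] eZ by blast
  have "e \<notin> insert b (Z - {a})" using eZ ab by simp
  then have 2: "insert b (Z - {a}) \<notin> snd D" using l'[of "insert b (Z - {a})"] by blast
  show False using Z 1 2 unfolding mem_slide[OF ab(3)] by simp
qed

lemma coloop_slide:
  assumes ab: "e \<noteq> a" "e \<noteq> b" "a \<noteq> b"
  shows "coloop (slide D a b) e \<longleftrightarrow> coloop D e"
proof
  assume "coloop (slide D a b) e"
  then have "coloop (slide (slide D a b) a b) e" by (rule coloop_slide1[OF ab])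
  then show "coloop D e" by (simp only: slide_slide[OF ab(3)])
next
  assume "coloop D e"
  then show "coloop (slide D a b) e" by (rule coloop_slide1[OF ab])
qed

lemma delete_slide:
  assumes ab: "e \<noteq> a" "e \<noteq> b" "a \<noteq> b"
  shows "delete (slide D a b) e = slide (delete D e) a b"
proof -
  have "snd (delete (slide D a b) e) = snd (slide (delete D e) a b)"
  proof (rule Set.set_eqI)
    fix Z
    have fd: "fst (delete D e) = fst D - {e}" by (simp add: delete_def)
    show "Z \<in> snd (delete (slide D a b) e) \<longleftrightarrow> Z \<in> snd (slide (delete D e) a b)"
    proof (cases "e \<in> Z")
      case True
      have "\<not> (Z - {a} \<subseteq> fst D - {e})" using True ab by blast
      then show ?thesis unfolding mem_delete mem_slide[OF ab(3)] fd using True by simp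
    next
      case False
      have "e \<notin> insert b (Z - {a})" using False ab by simp
      moreover have "(Z - {a} \<subseteq> fst D - {e}) \<longleftrightarrow> (Z - {a} \<subseteq> fst D)" using False by blast
      ultimately show ?thesis unfolding mem_delete mem_slide[OF ab(3)] fd using False by simp
    qed
  qed
  then show ?thesis by (simp add: prod_eq_iff slide_def delete_def)
qed

lemma contract_slide:
  assumes ab: "e \<noteq> a" "e \<noteq> b" "a \<noteq> b" and eE: "e \<in> fst D"
  shows "contract (slide D a b) e = slide (contract D e) a b"
proof -
  have "snd (contract (slide D a b) e) = snd (slide (contract D e) a b)"
  proof (rule Set.set_eqI)
    fix Z
    have fd: "fst (contract D e) = fst D - {e}" by (simp add: contract_def)
    show "Z \<in> snd (contract (slide D a b) e) \<longleftrightarrow> Z \<in> snd (slide (contract D e) a b)"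
    proof (cases "e \<in> Z")
      case True
      have "\<not> (Z - {a} \<subseteq> fst D - {e})" using True ab by blast
      then show ?thesis unfolding mem_contract mem_slide[OF ab(3)] fd using True by simp
    next
      case False
      have 1: "e \<notin> insert b (Z - {a})" using False ab by simp
      have 2: "(Z - {a} \<subseteq> fst D - {e}) \<longleftrightarrow> (Z - {a} \<subseteq> fst D)" using False by blast
      have 3: "(insert e Z - {a} \<subseteq> fst D) \<longleftrightarrow> (Z - {a} \<subseteq> fst D)" using eE ab by blast
      have 4: "insert b (insert e Z - {a}) = insert e (insert b (Z - {a}))" using ab by blast
      have 5: "(a \<in> insert e Z) = (a \<in> Z)" "(b \<in> insert e Z) = (b \<in> Z)" using ab by auto
      show ?thesis unfolding mem_contract mem_slide[OF ab(3)] fd 2 3 4 5 using False 1 by simp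
    qed
  qed
  then show ?thesis by (simp add: prod_eq_iff slide_def contract_def)
qed

lemma del_slide: "e \<noteq> a \<Longrightarrow> e \<noteq> b \<Longrightarrow> a \<noteq> b \<Longrightarrow> e \<in> fst D \<Longrightarrow> del (slide D a b) e = slide (del D e) a b"
  unfolding del_eq_delete contr_eq_delete_contract by (simp add: loop_slide coloop_slide delete_slide contract_slide)

lemma contr_slide: "e \<noteq> a \<Longrightarrow> e \<noteq> b \<Longrightarrow> a \<noteq> b \<Longrightarrow> e \<in> fst D \<Longrightarrow> contr (slide D a b) e = slide (contr D e) a b"
  unfolding contr_eq_delete_contract by (simp add: loop_slide delete_slide contract_slide)

lemma loop_twist: "e \<notin> T \<Longrightarrow> loop (twist D T) e \<longleftrightarrow> loop D e"
  unfolding loop_def twist_def by (auto simp: symdiff_def)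

lemma coloop_twist: "e \<notin> T \<Longrightarrow> coloop (twist D T) e \<longleftrightarrow> coloop D e"
  unfolding coloop_def twist_def by (auto simp: symdiff_def)

lemma delete_twist: "e \<notin> T \<Longrightarrow> delete (twist D T) e = twist (delete D e) T"
  unfolding delete_def twist_def by (auto simp: symdiff_def)

lemma contract_twist:
  assumes "e \<notin> T"
  shows "contract (twist D T) e = twist (contract D e) T"
proof -
  have "snd (contract (twist D T) e) = snd (twist (contract D e) T)"
  proof (rule Set.set_eqI)
    fix Z
    have "symdiff (insert e Z) T = insert e (symdiff Z T)" using assms by (auto simp: symdiff_def)
    then show "Z \<in> snd (contract (twist D T) e) \<longleftrightarrow> Z \<in> snd (twist (contract D e) T)"
      unfolding mem_contract mem_twist mem_contract using assms by (auto simp: symdiff_def)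
  qed
  then show ?thesis by (simp add: prod_eq_iff twist_def contract_def)
qed

lemma del_twist: "e \<notin> T \<Longrightarrow> del (twist D T) e = twist (del D e) T"
  unfolding del_eq_delete contr_eq_delete_contract by (simp add: loop_twist coloop_twist delete_twist contract_twist)

lemma contr_twist: "e \<notin> T \<Longrightarrow> contr (twist D T) e = twist (contr D e) T"
  unfolding contr_eq_delete_contract by (simp add: loop_twist delete_twist contract_twist)

lemma loop_exch: "e \<noteq> a \<Longrightarrow> e \<noteq> b \<Longrightarrow> a \<noteq> b \<Longrightarrow> loop (exch D a b) e \<longleftrightarrow> loop D e"
  unfolding exch_def by (simp add: loop_twist loop_slide)
lemma coloop_exch: "e \<noteq> a \<Longrightarrow> e \<noteq> b \<Longrightarrow> a \<noteq> b \<Longrightarrow> coloop (exch D a b) e \<longleftrightarrow> coloop D e"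
  unfolding exch_def by (simp add: coloop_twist coloop_slide)
lemma del_exch: "e \<noteq> a \<Longrightarrow> e \<noteq> b \<Longrightarrow> a \<noteq> b \<Longrightarrow> e \<in> fst D \<Longrightarrow> del (exch D a b) e = exch (del D e) a b"
  unfolding exch_def by (simp add: del_twist del_slide)
lemma contr_exch: "e \<noteq> a \<Longrightarrow> e \<noteq> b \<Longrightarrow> a \<noteq> b \<Longrightarrow> e \<in> fst D \<Longrightarrow> contr (exch D a b) e = exch (contr D e) a b"
  unfolding exch_def by (simp add: contr_twist contr_slide)


section \<open>Binary delta-matroids are closed under minors, twisting and sliding\<close>

definition twisted_nondeg :: "'a set \<Rightarrow> ('a \<Rightarrow> 'a \<Rightarrow> bool) \<Rightarrow> 'a set \<Rightarrow> 'a setsys" where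
  "twisted_nondeg V A T = twist (nondeg_dm V A) T"

lemma fst_twisted_nondeg [simp]: "fst (twisted_nondeg V A T) = V"
  by (simp add: twisted_nondeg_def twist_def nondeg_dm_def)

lemma snd_twisted_nondeg: "snd (twisted_nondeg V A T) = (\<lambda>X. symdiff X T) ` {X. X \<subseteq> V \<and> det_F2 A X \<noteq> 0}"
  by (simp add: twisted_nondeg_def twist_def nondeg_dm_def)

lemma mem_twisted_nondeg:
  assumes "T \<subseteq> V"
  shows "Z \<in> snd (twisted_nondeg V A T) \<longleftrightarrow> Z \<subseteq> V \<and> det_F2 A (symdiff Z T) \<noteq> 0"
proof -
  have "Z \<in> snd (twisted_nondeg V A T) \<longleftrightarrow> symdiff Z T \<subseteq> V \<and> det_F2 A (symdiff Z T) \<noteq> 0"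
    unfolding snd_twisted_nondeg mem_image_symdiff by simp
  also have "symdiff Z T \<subseteq> V \<longleftrightarrow> Z \<subseteq> V" using assms by (auto simp: symdiff_def)
  finally show ?thesis .
qed

lemma det_F2_empty: "det_F2 A {} = 1"
proof -
  have "{p. p permutes ({}::'a set)} = {id}" by auto
  then show ?thesis by (simp add: det_F2_def)
qed

lemma twist_set_mem_twisted_nondeg: "T \<in> snd (twisted_nondeg V A T)"
  unfolding snd_twisted_nondeg by (rule image_eqI[of _ _ "{}"]) (auto simp: det_F2_empty symdiff_def)

lemma framed_graph_subset: "framed_graph V A \<Longrightarrow> W \<subseteq> V \<Longrightarrow> framed_graph W A"
  unfolding framed_graph_def using finite_subset by blast

lemma binary_twisted_nondeg:
  assumes "framed_graph V A" "T \<subseteq> V"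
  shows "binary_dm (twisted_nondeg V A T)"
  unfolding binary_dm_def fst_twisted_nondeg
proof (intro exI conjI)
  show "framed_graph V A" "T \<subseteq> V" by fact+
  show "ss_iso (twist (nondeg_dm V A) T) (twisted_nondeg V A T)"
    unfolding ss_iso_def twisted_nondeg_def by (rule exI[of _ id]) (simp add: twist_def nondeg_dm_def)
qed

lemma det_F2_reindex: "inj_on h Y \<Longrightarrow> det_F2 (\<lambda>i j. A (h i) (h j)) Y = det_F2 A (h ` Y)"
  unfolding det_F2_eq_det_bit bit_matrix_def by (rule det_bit_reindex)

lemma image_symdiff: "inj_on g (X \<union> T) \<Longrightarrow> g ` symdiff X T = symdiff (g ` X) (g ` T)"
  by (auto simp: symdiff_def inj_on_def)

lemma image_twisted_nondeg:
  assumes g: "bij_betw g V W" and T: "T \<subseteq> V"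
  defines "h \<equiv> inv_into V g"
  shows "(\<lambda>\<phi>. g ` \<phi>) ` snd (twisted_nondeg V A T) = snd (twisted_nondeg W (\<lambda>i j. A (h i) (h j)) (g ` T))"
proof -
  have inj: "inj_on g V" and gV: "g ` V = W" using g by (auto simp: bij_betw_def)
  have injh: "inj_on h W" using bij_betw_inv_into[OF g] by (simp add: h_def bij_betw_def)
  have nonsingular: "(\<lambda>X. g ` X) ` {X. X \<subseteq> V \<and> det_F2 A X \<noteq> 0} =
      {Y. Y \<subseteq> W \<and> det_F2 (\<lambda>i j. A (h i) (h j)) Y \<noteq> 0}"
  proof (intro Set.set_eqI iffI)
    fix Y assume "Y \<in> (\<lambda>X. g ` X) ` {X. X \<subseteq> V \<and> det_F2 A X \<noteq> 0}"
    then obtain X where X: "X \<subseteq> V" "det_F2 A X \<noteq> 0" "Y = g ` X" by blast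
    have "h ` Y = X" unfolding h_def X(3) by (rule inv_into_image_cancel[OF inj X(1)])
    moreover have "Y \<subseteq> W" using X gV by auto
    ultimately show "Y \<in> {Y. Y \<subseteq> W \<and> det_F2 (\<lambda>i j. A (h i) (h j)) Y \<noteq> 0}"
      using X(2) det_F2_reindex[OF inj_on_subset[OF injh], of Y A] by simp
  next
    fix Y assume "Y \<in> {Y. Y \<subseteq> W \<and> det_F2 (\<lambda>i j. A (h i) (h j)) Y \<noteq> 0}"
    then have Y: "Y \<subseteq> W" "det_F2 (\<lambda>i j. A (h i) (h j)) Y \<noteq> 0" by auto
    have "g ` h ` Y = Y" unfolding h_def by (rule image_inv_into_cancel[OF gV Y(1)])
    moreover have "h ` Y \<subseteq> V" using Y(1) bij_betw_inv_into[OF g] by (auto simp: h_def bij_betw_def)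
    moreover have "det_F2 A (h ` Y) \<noteq> 0" using Y det_F2_reindex[OF inj_on_subset[OF injh], of Y A] by simp
    ultimately show "Y \<in> (\<lambda>X. g ` X) ` {X. X \<subseteq> V \<and> det_F2 A X \<noteq> 0}" by blast
  qed
  have "(\<lambda>\<phi>. g ` \<phi>) ` snd (twisted_nondeg V A T) =
      (\<lambda>X. symdiff (g ` X) (g ` T)) ` {X. X \<subseteq> V \<and> det_F2 A X \<noteq> 0}"
    unfolding snd_twisted_nondeg image_image
    using T by (intro image_cong refl image_symdiff inj_on_subset[OF inj]) auto
  also have "\<dots> = snd (twisted_nondeg W (\<lambda>i j. A (h i) (h j)) (g ` T))"
    unfolding snd_twisted_nondeg nonsingular[symmetric] image_image ..
  finally show ?thesis .
qed

lemma binary_dmE: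
  assumes "binary_dm D"
  obtains A T where "framed_graph (fst D) A" "T \<subseteq> fst D" "D = twisted_nondeg (fst D) A T"
proof -
  obtain A T g where fr: "framed_graph (fst D) A" and T: "T \<subseteq> fst D"
    and g: "bij_betw g (fst D) (fst D)" and D: "snd D = (\<lambda>\<phi>. g ` \<phi>) ` snd (twisted_nondeg (fst D) A T)"
    using assms unfolding binary_dm_def ss_iso_def twisted_nondeg_def
    by (auto simp: twist_def nondeg_dm_def)
  define h where "h = inv_into (fst D) g"
  show ?thesis
  proof (rule that)
    show "framed_graph (fst D) (\<lambda>i j. A (h i) (h j))"
      using fr bij_betwE[OF bij_betw_inv_into[OF g]] by (auto simp: framed_graph_def h_def)
    show "g ` T \<subseteq> fst D" using T g by (auto simp: bij_betw_def)
    show "D = twisted_nondeg (fst D) (\<lambda>i j. A (h i) (h j)) (g ` T)"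
      using image_twisted_nondeg[OF g T, of A] D by (simp add: prod_eq_iff h_def)
  qed
qed

lemma set_system_binary_dm:
  assumes "binary_dm D"
  shows "set_system D"
proof -
  obtain A T where fr: "framed_graph (fst D) A" and T: "T \<subseteq> fst D" and DT: "D = twisted_nondeg (fst D) A T"
    using assms by (rule binary_dmE)
  have "T \<in> snd D" using twist_set_mem_twisted_nondeg DT by metis
  moreover have "\<phi> \<subseteq> fst D" if "\<phi> \<in> snd D" for \<phi> using that mem_twisted_nondeg[OF T] DT by metis
  ultimately show ?thesis using fr unfolding set_system_def framed_graph_def by auto
qed

lemma binary_dm_feasible_subset: "binary_dm D \<Longrightarrow> \<phi> \<in> snd D \<Longrightarrow> \<phi> \<subseteq> fst D"
  using set_system_binary_dm[of D] unfolding set_system_def by blast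

lemma twisted_nondeg_pivot:
  assumes T: "T \<subseteq> V" and S: "S \<subseteq> V"
    and pivot: "\<And>Y. Y \<subseteq> V \<Longrightarrow> det_F2 A' Y \<noteq> 0 \<longleftrightarrow> det_F2 A (symdiff Y S) \<noteq> 0"
  shows "twisted_nondeg V A' (symdiff T S) = twisted_nondeg V A T"
proof -
  have TS: "symdiff T S \<subseteq> V" using T S by (auto simp: symdiff_def)
  have "Z \<in> snd (twisted_nondeg V A' (symdiff T S)) \<longleftrightarrow> Z \<in> snd (twisted_nondeg V A T)" for Z
  proof -
    have "symdiff (symdiff Z (symdiff T S)) S = symdiff Z T" by (auto simp: symdiff_def)
    moreover have "Z \<subseteq> V \<Longrightarrow> symdiff Z (symdiff T S) \<subseteq> V" using TS by (auto simp: symdiff_def)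
    ultimately show ?thesis
      unfolding mem_twisted_nondeg[OF TS] mem_twisted_nondeg[OF T] using pivot by metis
  qed
  then show ?thesis by (simp add: prod_eq_iff set_eq_iff)
qed

lemma twisted_nondeg_retwist_nonsingular:
  assumes "framed_graph V A" "T \<subseteq> V" "X \<subseteq> V" "det_F2 A X \<noteq> 0"
  shows "\<exists>A'. framed_graph V A' \<and> twisted_nondeg V A' (symdiff X T) = twisted_nondeg V A T"
  using assms
proof (induction "card X" arbitrary: A T X rule: less_induct)
  case less
  show ?case
  proof (cases "X = {}")
    case True
    then show ?thesis using less.prems by (auto simp: symdiff_def)
  next
    case False
    then obtain e where e: "e \<in> X" by blast
    obtain A1 S where A1: "framed_graph V A1" "e \<in> S" "S \<subseteq> X"
      and pivot: "\<And>Y. Y \<subseteq> V \<Longrightarrow> det_F2 A1 Y \<noteq> 0 \<longleftrightarrow> det_F2 A (symdiff Y S) \<noteq> 0"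
      using elementary_pivot[OF less.prems(1,3) e less.prems(4)] by blast
    have SV: "S \<subseteq> V" using A1(3) less.prems(3) by blast
    have "finite X" using less.prems(1,3) by (auto simp: framed_graph_def intro: finite_subset)
    then have "card (X - S) < card X" using A1(2,3) by (intro psubset_card_mono) auto
    moreover have "X - S \<subseteq> V" "symdiff T S \<subseteq> V" using less.prems(2,3) SV by (auto simp: symdiff_def)
    moreover have "det_F2 A1 (X - S) \<noteq> 0"
    proof -
      have "symdiff (X - S) S = X" using A1(3) by (auto simp: symdiff_def)
      then show ?thesis using pivot[of "X - S"] less.prems(3,4) by auto
    qed
    ultimately obtain A' where "framed_graph V A'"
      "twisted_nondeg V A' (symdiff (X - S) (symdiff T S)) = twisted_nondeg V A1 (symdiff T S)"
      using less.hyps A1(1) by blast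
    moreover have "symdiff (X - S) (symdiff T S) = symdiff X T" using A1(3) by (auto simp: symdiff_def)
    ultimately show ?thesis using twisted_nondeg_pivot[OF less.prems(2) SV pivot] by auto
  qed
qed

lemma binary_dm_retwist:
  assumes "binary_dm D" "\<phi> \<in> snd D"
  obtains A where "framed_graph (fst D) A" "D = twisted_nondeg (fst D) A \<phi>"
proof -
  obtain A T where fr: "framed_graph (fst D) A" and T: "T \<subseteq> fst D" and D: "D = twisted_nondeg (fst D) A T"
    using assms(1) by (rule binary_dmE)
  have "\<phi> \<in> snd (twisted_nondeg (fst D) A T)" using assms(2) D by metis
  then obtain X where "X \<subseteq> fst D" "det_F2 A X \<noteq> 0" "\<phi> = symdiff X T"
    unfolding snd_twisted_nondeg by auto
  then show ?thesis
    using twisted_nondeg_retwist_nonsingular[OF fr T] that D by metis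
qed

lemma twisted_nondeg_delete:
  assumes "\<phi> \<subseteq> V" "e \<notin> \<phi>"
  shows "delete (twisted_nondeg V A \<phi>) e = twisted_nondeg (V - {e}) A \<phi>"
proof -
  have "\<phi> \<subseteq> V - {e}" using assms by auto
  then show ?thesis
    using assms by (auto simp: prod_eq_iff set_eq_iff mem_delete mem_twisted_nondeg delete_def)
qed

lemma twisted_nondeg_contract:
  assumes \<phi>: "\<phi> \<subseteq> V" "e \<in> \<phi>"
  shows "contract (twisted_nondeg V A \<phi>) e = twisted_nondeg (V - {e}) A (\<phi> - {e})"
proof -
  have \<phi>': "\<phi> - {e} \<subseteq> V - {e}" using \<phi> by auto
  have "Z \<in> snd (contract (twisted_nondeg V A \<phi>) e) \<longleftrightarrow> Z \<in> snd (twisted_nondeg (V - {e}) A (\<phi> - {e}))" for Z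
  proof (cases "e \<in> Z")
    case True
    then show ?thesis unfolding mem_contract mem_twisted_nondeg[OF \<phi>'] by auto
  next
    case False
    then have "symdiff (insert e Z) \<phi> = symdiff Z (\<phi> - {e})" using \<phi> by (auto simp: symdiff_def)
    with False show ?thesis
      unfolding mem_contract mem_twisted_nondeg[OF \<phi>(1)] mem_twisted_nondeg[OF \<phi>'] using \<phi> by auto
  qed
  then show ?thesis by (simp add: prod_eq_iff set_eq_iff contract_def)
qed

lemma binary_del:
  assumes D: "binary_dm D" and e: "e \<in> fst D"
  shows "binary_dm (del D e)"
proof (cases "coloop D e")
  case True
  obtain \<phi> where "\<phi> \<in> snd D" using set_system_binary_dm[OF D] by (auto simp: set_system_def)
  with True have \<phi>: "\<phi> \<in> snd D" "e \<in> \<phi>" unfolding coloop_def by auto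
  then have "\<not> loop D e" unfolding loop_def by auto
  obtain A where fr: "framed_graph (fst D) A" and D\<phi>: "D = twisted_nondeg (fst D) A \<phi>"
    using binary_dm_retwist[OF D \<phi>(1)] by blast
  have "\<phi> \<subseteq> fst D" by (rule binary_dm_feasible_subset[OF D \<phi>(1)])
  have "del D e = contract D e" using True \<open>\<not> loop D e\<close> by (simp add: del_eq_delete contr_eq_delete_contract)
  also have "\<dots> = twisted_nondeg (fst D - {e}) A (\<phi> - {e})"
    using twisted_nondeg_contract[OF \<open>\<phi> \<subseteq> fst D\<close> \<phi>(2)] D\<phi> by metis
  finally show ?thesis
    using binary_twisted_nondeg[OF framed_graph_subset[OF fr], of "fst D - {e}" "\<phi> - {e}"] \<open>\<phi> \<subseteq> fst D\<close> by auto
next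
  case False
  then obtain \<phi> where \<phi>: "\<phi> \<in> snd D" "e \<notin> \<phi>" unfolding coloop_def by blast
  obtain A where fr: "framed_graph (fst D) A" and D\<phi>: "D = twisted_nondeg (fst D) A \<phi>"
    using binary_dm_retwist[OF D \<phi>(1)] by blast
  have "\<phi> \<subseteq> fst D" by (rule binary_dm_feasible_subset[OF D \<phi>(1)])
  have "del D e = delete D e" using False by (simp add: del_eq_delete)
  also have "\<dots> = twisted_nondeg (fst D - {e}) A \<phi>"
    using twisted_nondeg_delete[OF \<open>\<phi> \<subseteq> fst D\<close> \<phi>(2)] D\<phi> by metis
  finally show ?thesis
    using binary_twisted_nondeg[OF framed_graph_subset[OF fr], of "fst D - {e}" \<phi>] \<open>\<phi> \<subseteq> fst D\<close> \<phi>(2) by auto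
qed

lemma binary_contr:
  assumes D: "binary_dm D" and e: "e \<in> fst D"
  shows "binary_dm (contr D e)"
proof (cases "loop D e")
  case True
  obtain \<phi> where "\<phi> \<in> snd D" using set_system_binary_dm[OF D] by (auto simp: set_system_def)
  with True have \<phi>: "\<phi> \<in> snd D" "e \<notin> \<phi>" unfolding loop_def by auto
  obtain A where fr: "framed_graph (fst D) A" and D\<phi>: "D = twisted_nondeg (fst D) A \<phi>"
    using binary_dm_retwist[OF D \<phi>(1)] by blast
  have "\<phi> \<subseteq> fst D" by (rule binary_dm_feasible_subset[OF D \<phi>(1)])
  have "contr D e = delete D e" using True by (simp add: contr_eq_delete_contract)
  also have "\<dots> = twisted_nondeg (fst D - {e}) A \<phi>"
    using twisted_nondeg_delete[OF \<open>\<phi> \<subseteq> fst D\<close> \<phi>(2)] D\<phi> by metis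
  finally show ?thesis
    using binary_twisted_nondeg[OF framed_graph_subset[OF fr], of "fst D - {e}" \<phi>] \<open>\<phi> \<subseteq> fst D\<close> \<phi>(2) by auto
next
  case False
  then obtain \<phi> where \<phi>: "\<phi> \<in> snd D" "e \<in> \<phi>" unfolding loop_def by blast
  obtain A where fr: "framed_graph (fst D) A" and D\<phi>: "D = twisted_nondeg (fst D) A \<phi>"
    using binary_dm_retwist[OF D \<phi>(1)] by blast
  have "\<phi> \<subseteq> fst D" by (rule binary_dm_feasible_subset[OF D \<phi>(1)])
  have "contr D e = contract D e" using False by (simp add: contr_eq_delete_contract)
  also have "\<dots> = twisted_nondeg (fst D - {e}) A (\<phi> - {e})"
    using twisted_nondeg_contract[OF \<open>\<phi> \<subseteq> fst D\<close> \<phi>(2)] D\<phi> by metis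
  finally show ?thesis
    using binary_twisted_nondeg[OF framed_graph_subset[OF fr], of "fst D - {e}" "\<phi> - {e}"] \<open>\<phi> \<subseteq> fst D\<close> by auto
qed

lemma binary_twist:
  assumes D: "binary_dm D" and T': "T' \<subseteq> fst D"
  shows "binary_dm (twist D T')"
proof -
  obtain A T where fr: "framed_graph (fst D) A" and T: "T \<subseteq> fst D" and DT: "D = twisted_nondeg (fst D) A T"
    using D by (rule binary_dmE)
  have "twist D T' = twisted_nondeg (fst D) A (symdiff T T')"
    using DT by (metis twisted_nondeg_def twist_twist)
  moreover have "symdiff T T' \<subseteq> fst D" using T T' by (auto simp: symdiff_def)
  ultimately show ?thesis using binary_twisted_nondeg[OF fr] by simp
qed

lemma framed_graph_add_row_col:
  assumes fr: "framed_graph V A" and ab: "a \<in> V" "b \<in> V"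
  shows "framed_graph V (add_row_col A a b)"
  unfolding framed_graph_def
proof (intro conjI ballI)
  show "finite V" using fr by (simp add: framed_graph_def)
  fix i j assume ij: "i \<in> V" "j \<in> V"
  note s = framed_graph_sym[OF fr]
  show "add_row_col A a b i j = add_row_col A a b j i"
    using s[OF ij] s[OF ij(1) ab(1)] s[OF ij(1) ab(2)] s[OF ij(2) ab(1)] s[OF ij(2) ab(2)]
    unfolding add_row_col_def by (cases "i = a"; cases "j = a"; simp)
qed

lemma framed_graph_toggle_edge:
  assumes fr: "framed_graph V A" and ab: "a \<in> V" "b \<in> V"
  shows "framed_graph V (toggle_edge A a b)"
  unfolding framed_graph_def
proof (intro conjI ballI)
  show "finite V" using fr by (simp add: framed_graph_def)
  fix i j assume ij: "i \<in> V" "j \<in> V"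
  show "toggle_edge A a b i j = toggle_edge A a b j i"
    using framed_graph_sym[OF fr ij] unfolding toggle_edge_def
    by (cases "i = a"; cases "j = a"; cases "i = b"; cases "j = b"; simp)
qed

lemma if_else_0_nonzero_iff: "(if c then y else 0) \<noteq> 0 \<longleftrightarrow> c \<and> y \<noteq> 0"
  by simp

lemma bit_add_nonzero_iff: "(x::bit) + y \<noteq> 0 \<longleftrightarrow> (x \<noteq> 0) \<noteq> (y \<noteq> 0)"
  by (cases x; cases y) simp_all

lemma det_F2_add_row_col_nonzero_iff:
  assumes fr: "framed_graph V A" and X: "X \<subseteq> V" and ab: "a \<in> V" "b \<in> V" "a \<noteq> b"
  shows "det_F2 (add_row_col A a b) X \<noteq> 0 \<longleftrightarrow>
    (det_F2 A X \<noteq> 0) \<noteq> (a \<in> X \<and> b \<notin> X \<and> det_F2 A (insert b (X - {a})) \<noteq> 0)"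
proof -
  have "finite V" using fr by (simp add: framed_graph_def)
  then have e: "det_bit (bit_matrix (add_row_col A a b)) X = det_bit (bit_matrix A) X +
      (if a \<in> X \<and> b \<notin> X then det_bit (bit_matrix A) (insert b (X - {a})) else 0)"
    by (rule det_bit_add_row_col[OF _ X ab framed_graph_sym[OF fr]])
  show ?thesis unfolding det_F2_eq_det_bit e bit_add_nonzero_iff if_else_0_nonzero_iff conj_assoc ..
qed

lemma det_F2_toggle_edge_nonzero_iff:
  assumes fr: "framed_graph V A" and X: "X \<subseteq> V" and ab: "a \<in> V" "b \<in> V" "a \<noteq> b"
  shows "det_F2 (toggle_edge A a b) X \<noteq> 0 \<longleftrightarrow>
    (det_F2 A X \<noteq> 0) \<noteq> (a \<in> X \<and> b \<in> X \<and> det_F2 A (X - {a, b}) \<noteq> 0)"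
proof -
  have "finite V" using fr by (simp add: framed_graph_def)
  then have e: "det_bit (bit_matrix (toggle_edge A a b)) X = det_bit (bit_matrix A) X +
      (if a \<in> X \<and> b \<in> X then det_bit (bit_matrix A) (X - {a, b}) else 0)"
    by (rule det_bit_toggle_edge[OF _ X ab framed_graph_sym[OF fr]])
  show ?thesis unfolding det_F2_eq_det_bit e bit_add_nonzero_iff if_else_0_nonzero_iff conj_assoc ..
qed

lemma slide_twisted_nondeg_add_row_col:
  assumes fr: "framed_graph V A" and \<phi>: "\<phi> \<subseteq> V" "a \<notin> \<phi>" "b \<notin> \<phi>" and ab: "a \<in> V" "b \<in> V" "a \<noteq> b"
  shows "slide (twisted_nondeg V A \<phi>) a b = twisted_nondeg V (add_row_col A a b) \<phi>"
proof -
  have "Z \<in> snd (slide (twisted_nondeg V A \<phi>) a b) \<longleftrightarrow> Z \<in> snd (twisted_nondeg V (add_row_col A a b) \<phi>)" for Z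
  proof (cases "Z \<subseteq> V")
    case False
    then show ?thesis using ab(1) by (auto simp: mem_slide[OF ab(3)] mem_twisted_nondeg[OF \<phi>(1)])
  next
    case True
    define X where "X = symdiff Z \<phi>"
    have X: "X \<subseteq> V" "a \<in> X \<longleftrightarrow> a \<in> Z" "b \<in> X \<longleftrightarrow> b \<in> Z"
      using True \<phi> by (auto simp: X_def symdiff_def)
    have "a \<in> Z \<Longrightarrow> b \<notin> Z \<Longrightarrow> symdiff (insert b (Z - {a})) \<phi> = insert b (X - {a})"
      using \<phi> by (auto simp: X_def symdiff_def)
    then show ?thesis using True ab
      unfolding mem_slide[OF ab(3)] mem_twisted_nondeg[OF \<phi>(1)] fst_twisted_nondeg X_def[symmetric]
        det_F2_add_row_col_nonzero_iff[OF fr X(1) ab] X(2,3)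
      by (cases "b \<in> Z") auto
  qed
  then show ?thesis by (simp add: prod_eq_iff set_eq_iff slide_def)
qed

lemma slide_twisted_nondeg_toggle_edge:
  assumes fr: "framed_graph V A" and \<phi>: "\<phi> \<subseteq> V" "a \<notin> \<phi>" "b \<in> \<phi>" and ab: "a \<in> V" "b \<in> V" "a \<noteq> b"
  shows "slide (twisted_nondeg V A \<phi>) a b = twisted_nondeg V (toggle_edge A a b) \<phi>"
proof -
  have "Z \<in> snd (slide (twisted_nondeg V A \<phi>) a b) \<longleftrightarrow> Z \<in> snd (twisted_nondeg V (toggle_edge A a b) \<phi>)" for Z
  proof (cases "Z \<subseteq> V")
    case False
    then show ?thesis using ab(1) by (auto simp: mem_slide[OF ab(3)] mem_twisted_nondeg[OF \<phi>(1)])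
  next
    case True
    define X where "X = symdiff Z \<phi>"
    have X: "X \<subseteq> V" "a \<in> X \<longleftrightarrow> a \<in> Z" "b \<in> X \<longleftrightarrow> b \<notin> Z"
      using True \<phi> by (auto simp: X_def symdiff_def)
    have "a \<in> Z \<Longrightarrow> b \<notin> Z \<Longrightarrow> symdiff (insert b (Z - {a})) \<phi> = X - {a, b}"
      using \<phi> ab by (auto simp: X_def symdiff_def)
    then show ?thesis using True ab
      unfolding mem_slide[OF ab(3)] mem_twisted_nondeg[OF \<phi>(1)] fst_twisted_nondeg X_def[symmetric]
        det_F2_toggle_edge_nonzero_iff[OF fr X(1) ab] X(2,3)
      by (cases "b \<in> Z") auto
  qed
  then show ?thesis by (simp add: prod_eq_iff set_eq_iff slide_def)
qed

lemma binary_slide: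
  assumes D: "binary_dm D" and ab: "a \<in> fst D" "b \<in> fst D" "a \<noteq> b"
  shows "binary_dm (slide D a b)"
proof (cases "\<exists>\<phi>\<in>snd D. a \<notin> \<phi>")
  case True
  then obtain \<phi> where \<phi>: "\<phi> \<in> snd D" "a \<notin> \<phi>" by blast
  obtain A where fr: "framed_graph (fst D) A" and D\<phi>: "D = twisted_nondeg (fst D) A \<phi>"
    using binary_dm_retwist[OF D \<phi>(1)] by blast
  have "\<phi> \<subseteq> fst D" by (rule binary_dm_feasible_subset[OF D \<phi>(1)])
  show ?thesis
  proof (cases "b \<in> \<phi>")
    case False
    have "slide D a b = twisted_nondeg (fst D) (add_row_col A a b) \<phi>"
      using slide_twisted_nondeg_add_row_col[OF fr \<open>\<phi> \<subseteq> fst D\<close> \<phi>(2) False ab] D\<phi> by metis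
    then show ?thesis using binary_twisted_nondeg[OF framed_graph_add_row_col[OF fr ab(1,2)] \<open>\<phi> \<subseteq> fst D\<close>] by simp
  next
    case True
    have "slide D a b = twisted_nondeg (fst D) (toggle_edge A a b) \<phi>"
      using slide_twisted_nondeg_toggle_edge[OF fr \<open>\<phi> \<subseteq> fst D\<close> \<phi>(2) True ab] D\<phi> by metis
    then show ?thesis using binary_twisted_nondeg[OF framed_graph_toggle_edge[OF fr ab(1,2)] \<open>\<phi> \<subseteq> fst D\<close>] by simp
  qed
next
  case False
  then show ?thesis using slide_eq_self[of D a b] D ab(3) by auto
qed

lemma binary_exch:
  assumes "binary_dm D" "a \<in> fst D" "b \<in> fst D" "a \<noteq> b"
  shows "binary_dm (exch D a b)"
  unfolding exch_def using assms by (intro binary_twist binary_slide) auto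

section \<open>Delta-matroids on at most two elements\<close>

lemma mem_slide_pair:
  assumes ab: "a \<noteq> b" and D: "fst D = {a, b}"
  shows "{} \<in> snd (slide D a b) \<longleftrightarrow> {} \<in> snd D"
    "{a} \<in> snd (slide D a b) \<longleftrightarrow> ({a} \<in> snd D) \<noteq> ({b} \<in> snd D)"
    "{b} \<in> snd (slide D a b) \<longleftrightarrow> {b} \<in> snd D"
    "{a, b} \<in> snd (slide D a b) \<longleftrightarrow> {a, b} \<in> snd D"
  unfolding mem_slide[OF ab] D using ab by auto

lemma mem_exch_pair:
  assumes ab: "a \<noteq> b" and D: "fst D = {a, b}"
  shows "{} \<in> snd (exch D a b) \<longleftrightarrow> {} \<in> snd D"
    "{a} \<in> snd (exch D a b) \<longleftrightarrow> {a} \<in> snd D"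
    "{b} \<in> snd (exch D a b) \<longleftrightarrow> {b} \<in> snd D"
    "{a, b} \<in> snd (exch D a b) \<longleftrightarrow> ({a, b} \<in> snd D) \<noteq> ({} \<in> snd D)"
proof -
  have "symdiff {} {b} = {b}" "symdiff {a} {b} = {a, b}" "symdiff {b} {b} = {}" "symdiff {a, b} {b} = {a}"
    using ab by (auto simp: symdiff_def)
  then show "{} \<in> snd (exch D a b) \<longleftrightarrow> {} \<in> snd D"
    "{a} \<in> snd (exch D a b) \<longleftrightarrow> {a} \<in> snd D"
    "{b} \<in> snd (exch D a b) \<longleftrightarrow> {b} \<in> snd D"
    "{a, b} \<in> snd (exch D a b) \<longleftrightarrow> ({a, b} \<in> snd D) \<noteq> ({} \<in> snd D)"
    unfolding exch_def mem_twist mem_slide[OF ab] fst_twist D using ab by (auto simp: insert_Diff_if)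
qed

lemma delete_singleton:
  assumes "set_system D" "fst D = {e}" "{} \<in> snd D"
  shows "delete D e = ({}, {{}})"
  using assms by (auto simp: set_system_def delete_def)

lemma contract_singleton:
  assumes "set_system D" "fst D = {e}" "{e} \<in> snd D"
  shows "contract D e = ({}, {{}})"
proof -
  have "Z \<in> snd (contract D e) \<longleftrightarrow> Z = {}" for Z
  proof
    assume "Z \<in> snd (contract D e)"
    then have "e \<notin> Z" "insert e Z \<subseteq> {e}" using assms by (auto simp: set_system_def mem_contract)
    then show "Z = {}" by auto
  qed (use assms(3) in \<open>simp add: mem_contract\<close>)
  then show ?thesis using assms(2) by (auto simp: prod_eq_iff contract_def)
qed

text \<open>The value of f on a one-element delta-matroid, relative to its value on the empty one, in terms
  of the feasibility of the empty set and of the singleton.\<close>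

definition singleton_factor :: "'r::comm_ring \<Rightarrow> 'r \<Rightarrow> 'r \<Rightarrow> 'r \<Rightarrow> bool \<Rightarrow> bool \<Rightarrow> 'r" where
  "singleton_factor x y z w p q = (if p \<and> q then x + y else if p then z else w)"

text \<open>The value on a two-element delta-matroid obtained by expanding along its first element; the
  arguments record the feasibility of the empty set, of the two singletons and of the pair.\<close>

definition pair_value :: "'r::comm_ring \<Rightarrow> 'r \<Rightarrow> 'r \<Rightarrow> 'r \<Rightarrow> 'r \<Rightarrow> bool \<Rightarrow> bool \<Rightarrow> bool \<Rightarrow> bool \<Rightarrow> 'r" where
  "pair_value x y z w c p0 pa pb pab =
     (if \<not> pa \<and> \<not> pab then z * (singleton_factor x y z w p0 pb * c)
      else if \<not> p0 \<and> \<not> pb then w * (singleton_factor x y z w pa pab * c)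
      else x * (singleton_factor x y z w p0 pb * c) + y * (singleton_factor x y z w pa pab * c))"

text \<open>When the empty set, the second singleton and the pair are feasible but the first singleton is
  not, we expand along the second element instead; both expansions compute the same value of f.\<close>

definition pair_value' :: "'r::comm_ring \<Rightarrow> 'r \<Rightarrow> 'r \<Rightarrow> 'r \<Rightarrow> 'r \<Rightarrow> bool \<Rightarrow> bool \<Rightarrow> bool \<Rightarrow> bool \<Rightarrow> 'r" where
  "pair_value' x y z w c p0 pa pb pab =
     (if p0 \<and> \<not> pa \<and> pb \<and> pab then pair_value x y z w c p0 pb pa pab
      else pair_value x y z w c p0 pa pb pab)"

lemma pair_value'_exch_slide_identity:
  fixes x y z w c :: "'r::comm_ring"
  assumes "p0 \<or> pa \<or> pb \<or> pab"
  shows "pair_value' x y z w c p0 pa pb pab - pair_value' x y z w c p0 pa pb (pab \<noteq> p0) =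
    pair_value' x y z w c p0 (pa \<noteq> pb) pb pab - pair_value' x y z w c p0 (pa \<noteq> pb) pb (pab \<noteq> p0)"
  using assms unfolding pair_value'_def pair_value_def singleton_factor_def
  by (cases p0; cases pa; cases pb; cases pab; simp add: algebra_simps)

section \<open>Invariants defined by a deletion-contraction recursion\<close>

locale dm_recursion =
  fixes f :: "'a setsys \<Rightarrow> 'r::comm_ring" and x y z w :: 'r
  assumes recursion: "\<And>D e. binary_dm D \<Longrightarrow> e \<in> fst D \<Longrightarrow> \<not> loop D e \<Longrightarrow> \<not> coloop D e \<Longrightarrow>
      f D = x * f (del D e) + y * f (contr D e)"
    and loop_recursion: "\<And>D e. binary_dm D \<Longrightarrow> e \<in> fst D \<Longrightarrow> loop D e \<Longrightarrow> f D = z * f (del D e)"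
    and coloop_recursion: "\<And>D e. binary_dm D \<Longrightarrow> e \<in> fst D \<Longrightarrow> coloop D e \<Longrightarrow> f D = w * f (contr D e)"
begin

lemma f_recursion:
  assumes "binary_dm D" "e \<in> fst D"
  shows "f D = (if loop D e then z * f (del D e) else if coloop D e then w * f (contr D e)
    else x * f (del D e) + y * f (contr D e))"
  using assms recursion loop_recursion coloop_recursion by simp

lemma f_singleton:
  assumes D: "binary_dm D" and e: "fst D = {e}"
  shows "f D = singleton_factor x y z w ({} \<in> snd D) ({e} \<in> snd D) * f ({}, {{}})"
proof -
  have ss: "set_system D" by (rule set_system_binary_dm[OF D])
  then have sub: "\<And>\<phi>. \<phi> \<in> snd D \<Longrightarrow> \<phi> = {} \<or> \<phi> = {e}" using e by (auto simp: set_system_def)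
  have lo: "loop D e \<longleftrightarrow> {e} \<notin> snd D" and co: "coloop D e \<longleftrightarrow> {} \<notin> snd D"
    unfolding loop_def coloop_def using sub by auto
  have "{} \<in> snd D \<or> {e} \<in> snd D" using ss sub by (auto simp: set_system_def)
  then show ?thesis
    using f_recursion[OF D, of e] delete_singleton[OF ss e] contract_singleton[OF ss e] e
    unfolding del_eq_delete contr_eq_delete_contract lo co singleton_factor_def
    by (auto simp: distrib_right)
qed

lemma f_pair:
  assumes D: "binary_dm D" and uv: "fst D = {u, v}" "u \<noteq> v"
  shows "f D = pair_value x y z w (f ({}, {{}})) ({} \<in> snd D) ({u} \<in> snd D) ({v} \<in> snd D) ({u, v} \<in> snd D)"
proof -
  have sub: "\<And>\<phi>. \<phi> \<in> snd D \<Longrightarrow> \<phi> = {} \<or> \<phi> = {u} \<or> \<phi> = {v} \<or> \<phi> = {u, v}"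
    using set_system_binary_dm[OF D] uv(1) by (auto simp: set_system_def)
  have lo: "loop D u \<longleftrightarrow> {u} \<notin> snd D \<and> {u, v} \<notin> snd D"
    unfolding loop_def using sub uv(2) by fastforce
  have co: "coloop D u \<longleftrightarrow> {} \<notin> snd D \<and> {v} \<notin> snd D"
    unfolding coloop_def using sub uv(2) by fastforce
  have fst: "fst (delete D u) = {v}" "fst (contract D u) = {v}"
    using uv by (auto simp: delete_def contract_def)
  have "binary_dm (delete D u)" if "\<not> coloop D u"
    using binary_del[OF D, of u] that uv(1) by (simp add: del_eq_delete)
  then have fd: "f (delete D u) = singleton_factor x y z w ({} \<in> snd D) ({v} \<in> snd D) * f ({}, {{}})"
    if "\<not> coloop D u" using f_singleton[OF _ fst(1)] that uv(2) by (auto simp: mem_delete)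
  have "binary_dm (contract D u)" if "\<not> loop D u"
    using binary_contr[OF D, of u] that uv(1) by (simp add: contr_eq_delete_contract)
  then have fc: "f (contract D u) = singleton_factor x y z w ({u} \<in> snd D) ({u, v} \<in> snd D) * f ({}, {{}})"
    if "\<not> loop D u" using f_singleton[OF _ fst(2)] that uv(2) by (auto simp: mem_contract insert_commute)
  have "\<not> (loop D u \<and> coloop D u)"
    using set_system_binary_dm[OF D] unfolding loop_def coloop_def set_system_def by blast
  then show ?thesis
    using f_recursion[OF D, of u] fd fc uv(1)
    unfolding del_eq_delete contr_eq_delete_contract pair_value_def lo co
    by (auto simp: mult.assoc)
qed

lemma f_pair':
  assumes D: "binary_dm D" and ab: "fst D = {a, b}" "a \<noteq> b"
  shows "f D = pair_value' x y z w (f ({}, {{}})) ({} \<in> snd D) ({a} \<in> snd D) ({b} \<in> snd D) ({a, b} \<in> snd D)"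
proof -
  have swapped: "f D = pair_value x y z w (f ({}, {{}})) ({} \<in> snd D) ({b} \<in> snd D) ({a} \<in> snd D) ({a, b} \<in> snd D)"
    using f_pair[of D b a] D ab by (simp add: insert_commute)
  show ?thesis
  proof (cases "{} \<in> snd D \<and> {a} \<notin> snd D \<and> {b} \<in> snd D \<and> {a, b} \<in> snd D")
    case True
    show ?thesis unfolding pair_value'_def if_P[OF True] by (rule swapped)
  next
    case False
    show ?thesis unfolding pair_value'_def if_not_P[OF False] by (rule f_pair[OF D ab])
  qed
qed

definition exch_defect :: "'a setsys \<Rightarrow> 'a \<Rightarrow> 'a \<Rightarrow> 'r" where
  "exch_defect D a b = (f D - f (exch D a b)) - (f (slide D a b) - f (exch (slide D a b) a b))"

lemma exch_defect_pair:
  assumes D: "binary_dm D" and ab: "fst D = {a, b}" "a \<noteq> b"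
  shows "exch_defect D a b = 0"
proof -
  have "a \<in> fst D" "b \<in> fst D" using ab by auto
  note binary = binary_slide[OF D this ab(2)] binary_exch[OF D this ab(2)]
    binary_exch[OF binary_slide[OF D this ab(2)]]
  obtain \<phi> where "\<phi> \<in> snd D" using set_system_binary_dm[OF D] by (auto simp: set_system_def)
  moreover have "\<phi> \<subseteq> {a, b}" using binary_dm_feasible_subset[OF D calculation] ab(1) by simp
  moreover have "\<phi> \<subseteq> {a, b} \<Longrightarrow> \<phi> = {} \<or> \<phi> = {a} \<or> \<phi> = {b} \<or> \<phi> = {a, b}" by auto
  ultimately have "{} \<in> snd D \<or> {a} \<in> snd D \<or> {b} \<in> snd D \<or> {a, b} \<in> snd D" by metis
  then show ?thesis
    unfolding exch_defect_def
    using f_pair'[OF D ab] f_pair'[OF binary(1)] f_pair'[OF binary(2)] f_pair'[OF binary(3)]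
      pair_value'_exch_slide_identity ab
    by (simp add: mem_slide_pair mem_exch_pair)
qed

lemma exch_defect_recursion:
  assumes D: "binary_dm D" and ab: "a \<in> fst D" "b \<in> fst D" "a \<noteq> b"
    and e: "e \<in> fst D" "e \<noteq> a" "e \<noteq> b"
  shows "exch_defect D a b = (if loop D e then z * exch_defect (del D e) a b
    else if coloop D e then w * exch_defect (contr D e) a b
    else x * exch_defect (del D e) a b + y * exch_defect (contr D e) a b)"
proof -
  have S: "binary_dm (slide D a b)" by (rule binary_slide[OF D ab])
  have "a \<in> fst (slide D a b)" "b \<in> fst (slide D a b)" using ab by simp_all
  note f_ops = f_recursion[OF D e(1)] f_recursion[OF S, of e] f_recursion[OF binary_exch[OF D ab], of e]
    f_recursion[OF binary_exch[OF S this ab(3)], of e]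
  show ?thesis
    using f_ops e ab(3)
    by (simp add: exch_defect_def loop_slide coloop_slide loop_exch coloop_exch del_slide contr_slide
        del_exch contr_exch algebra_simps)
qed

theorem exch_defect_eq_0:
  assumes "binary_dm D" "a \<in> fst D" "b \<in> fst D" "a \<noteq> b"
  shows "exch_defect D a b = 0"
  using assms
proof (induction "card (fst D)" arbitrary: D rule: less_induct)
  case less
  show ?case
  proof (cases "fst D = {a, b}")
    case True
    then show ?thesis using exch_defect_pair less.prems by blast
  next
    case False
    then obtain e where e: "e \<in> fst D" "e \<noteq> a" "e \<noteq> b" using less.prems(2,3) by blast
    have "finite (fst D)" using set_system_binary_dm[OF less.prems(1)] by (simp add: set_system_def)
    then have "card (fst D - {e}) < card (fst D)" using e(1) by (rule card_Diff1_less)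
    then have "exch_defect (del D e) a b = 0" "exch_defect (contr D e) a b = 0"
      using less.hyps binary_del[OF less.prems(1) e(1)] binary_contr[OF less.prems(1) e(1)] less.prems e
      by auto
    then show ?thesis using exch_defect_recursion[OF less.prems e] by simp
  qed
qed

end

theorem proposition4p6:
  fixes f :: "'a setsys \<Rightarrow> 'r::comm_ring" and x y z w :: 'r
  assumes iso: "\<And>D1 D2. binary_dm D1 \<Longrightarrow> binary_dm D2 \<Longrightarrow> ss_iso D1 D2 \<Longrightarrow> f D1 = f D2"
    and rec: "\<And>D e. binary_dm D \<Longrightarrow> e \<in> fst D \<Longrightarrow> \<not> loop D e \<Longrightarrow> \<not> coloop D e \<Longrightarrow>
                f D = x * f (del D e) + y * f (contr D e)"
    and lp: "\<And>D e. binary_dm D \<Longrightarrow> e \<in> fst D \<Longrightarrow> loop D e \<Longrightarrow> f D = z * f (del D e)"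
    and clp: "\<And>D e. binary_dm D \<Longrightarrow> e \<in> fst D \<Longrightarrow> coloop D e \<Longrightarrow> f D = w * f (contr D e)"
    and D: "binary_dm D" and ab: "a \<in> fst D" "b \<in> fst D" "a \<noteq> b"
  shows "f D - f (exch D a b) = f (slide D a b) - f (exch (slide D a b) a b)"
proof -
  interpret dm_recursion f x y z w
    by unfold_locales (fact rec lp clp)+
  show ?thesis using exch_defect_eq_0[OF D ab] by (simp add: exch_defect_def)
qed

end
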